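(* Let $V$ be a finite set, let $E$ be a set (possibly empty) of subsets of $V$ each of cardinality at least 2, and let $\lambda$ and $\{\lambda_A\}_{A\in E}$ be complex numbers. (a) If the hypergraph $G=(V,E)$ is a hyperforest and $\{C_\gamma\}$ is the partition of $V$ into the vertex sets of the connected components of $G$, then $\prod_{A\in E}f_A^{(\lambda)}=\prod_\gamma f_{C_\gamma}^{(\lambda)}$; more generally $\prod_{A\in E}f_A^{(\lambda_A)}=\prod_\gamma f_{C_\gamma}^{(\lambda_\gamma)}$, where $\lambda_\gamma=\sum_{A}(|A|-1)\lambda_A\big/\sum_A(|A|-1)$ with both sums over the hyperedges $A\in E$ contained in $C_\gamma$. (b) If $G$ is not a hyperforest, then $\prod_{A\in E}f_A^{(\lambda)}=0$ and more generally $\prod_{A\in E}f_A^{(\lambda_A)}=0$.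
   Context: A hypergraph is a pair $G=(V,E)$ with $V$ finite and $E$ a set of subsets of $V$ each of cardinality at least 2. Walks $(v_0,e_1,\ldots,e_k,v_k)$ require $v_{i-1},v_i\in e_i\in E$; connected components are the classes of vertices joined by walks (isolated vertices form singleton components). A cycle is a walk with $v_0,\ldots,v_{k-1}$ distinct, $v_k=v_0$, $e_1,\ldots,e_k$ distinct, $k\ge2$; a hyperforest has no cycles. For each $i\in V$ let $\psi_i,\bar\psi_i$ be anticommuting generators of a Grassmann algebra over $\mathbb{C}$; $\tau_A=\prod_{i\in A}\bar\psi_i\psi_i$ ($\tau_\emptyset=1$); $f_A^{(\lambda)}=\lambda(1-|A|)\tau_A+\sum_{i\in A}\tau_{A\setminus\{i\}}-\sum_{i,j\in A,\ i\neq j}\bar\psi_i\psi_j\,\tau_{A\setminus\{i,j\}}$. Note $f_{\{i\}}^{(\lambda)}=1$ for any $\lambda$. *)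

theory Defs
  imports Complex_Main "HOL-Library.Product_Lexorder"
begin

definition hypergraph :: "'a set \<Rightarrow> 'a set set \<Rightarrow> bool" where
  "hypergraph V E \<longleftrightarrow> finite V \<and> (\<forall>A\<in>E. A \<subseteq> V \<and> card A \<ge> 2)"

definition is_walk :: "'a set set \<Rightarrow> 'a list \<Rightarrow> 'a set list \<Rightarrow> bool" where
  "is_walk E vs es \<longleftrightarrow> length vs = Suc (length es) \<and>
     (\<forall>i < length es. es ! i \<in> E \<and> vs ! i \<in> es ! i \<and> vs ! Suc i \<in> es ! i)"

definition walk_connected :: "'a set set \<Rightarrow> 'a \<Rightarrow> 'a \<Rightarrow> bool" where
  "walk_connected E u v \<longleftrightarrow> (\<exists>vs es. is_walk E vs es \<and> hd vs = u \<and> last vs = v)"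

text \<open>Vertex sets of the connected components (isolated vertices give singletons).\<close>
definition components :: "'a set \<Rightarrow> 'a set set \<Rightarrow> 'a set set" where
  "components V E = {{v \<in> V. walk_connected E u v} | u. u \<in> V}"

definition is_cycle :: "'a set set \<Rightarrow> 'a list \<Rightarrow> 'a set list \<Rightarrow> bool" where
  "is_cycle E vs es \<longleftrightarrow> is_walk E vs es \<and> length es \<ge> 2 \<and>
     distinct (butlast vs) \<and> last vs = hd vs \<and> distinct es"

definition hyperforest :: "'a set set \<Rightarrow> bool" where
  "hyperforest E \<longleftrightarrow> \<not> (\<exists>vs es. is_cycle E vs es)"

text \<open>Generators are indexed by pairs (i, b): (i, False) is psi_i and (i, True) is psibar_i.
  An element of the Grassmann algebra is a coefficient function on finite sets of generators;
  the set S = {g_1 < ... < g_m} stands for the ordered monomial g_1 g_2 ... g_m.\<close>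
type_synonym 'a grass = "('a \<times> bool) set \<Rightarrow> complex"

definition gsign :: "('a::linorder \<times> bool) set \<Rightarrow> ('a \<times> bool) set \<Rightarrow> complex" where
  "gsign T U = (-1) ^ card {(t, u). t \<in> T \<and> u \<in> U \<and> u < t}"

definition gmult :: "'a::linorder grass \<Rightarrow> 'a grass \<Rightarrow> 'a grass" where
  "gmult x y = (\<lambda>S. if finite S then (\<Sum>T\<in>Pow S. gsign T (S - T) * x T * y (S - T)) else 0)"

definition gconst :: "complex \<Rightarrow> 'a grass" where
  "gconst c = (\<lambda>S. if S = {} then c else 0)"

definition gadd :: "'a grass \<Rightarrow> 'a grass \<Rightarrow> 'a grass" where
  "gadd x y = (\<lambda>S. x S + y S)"

definition gsub :: "'a grass \<Rightarrow> 'a grass \<Rightarrow> 'a grass" where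
  "gsub x y = (\<lambda>S. x S - y S)"

definition gscale :: "complex \<Rightarrow> 'a grass \<Rightarrow> 'a grass" where
  "gscale c x = (\<lambda>S. c * x S)"

definition gsum :: "('b \<Rightarrow> 'a grass) \<Rightarrow> 'b set \<Rightarrow> 'a grass" where
  "gsum f I = (\<lambda>S. \<Sum>i\<in>I. f i S)"

definition gprod :: "'a::linorder grass list \<Rightarrow> 'a grass" where
  "gprod xs = foldr gmult xs (gconst 1)"

definition gen :: "'a \<times> bool \<Rightarrow> 'a grass" where
  "gen g = (\<lambda>S. if S = {g} then 1 else 0)"

definition psi :: "'a \<Rightarrow> 'a grass" where "psi i = gen (i, False)"
definition psibar :: "'a \<Rightarrow> 'a grass" where "psibar i = gen (i, True)"

text \<open>tau_A = prod_{i in A} psibar_i psi_i (the factors are even, so the order is irrelevant;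
  we use increasing order).\<close>
definition tau :: "'a::linorder set \<Rightarrow> 'a grass" where
  "tau A = gprod (map (\<lambda>i. gmult (psibar i) (psi i)) (sorted_list_of_set A))"

definition fA :: "complex \<Rightarrow> 'a::linorder set \<Rightarrow> 'a grass" where
  "fA lam A = gsub (gadd (gscale (lam * (1 - of_nat (card A))) (tau A))
                         (gsum (\<lambda>i. tau (A - {i})) A))
                   (gsum (\<lambda>(i, j). gmult (gmult (psibar i) (psi j)) (tau (A - {i, j})))
                         {(i, j). i \<in> A \<and> j \<in> A \<and> i \<noteq> j})"

definition comp_lambda :: "'a set set \<Rightarrow> ('a set \<Rightarrow> complex) \<Rightarrow> 'a set \<Rightarrow> complex" where
  "comp_lambda E lamA C =
     (\<Sum>A\<in>{A\<in>E. A \<subseteq> C}. of_nat (card A - 1) * lamA A) /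
     (\<Sum>A\<in>{A\<in>E. A \<subseteq> C}. of_nat (card A - 1))"

end

theory Submission
  imports Defs
begin

text \<open>
  In the even part of the Grassmann algebra, a commutative ring, put e i j = psibar_i psi_j;
  then e i j * e i l = 0, e i j * e k j = 0 and e i j * e k l = - e i l * e k j.  Write
  f_A^(lambda) = F_A - N tau_A with N = lambda (card A - 1).  For r \<in> A and k \<notin> A one computes
  F_(A \<union> {k}) = F_A (psibar_k - psibar_r)(psi_k - psi_r), and tau_A = F_A e r r.  Consequently,
  if A \<inter> B = {v} then F_A F_B = F_(A \<union> B), F_A tau_B = tau_(A \<union> B) and tau_A tau_B = 0, so the
  factors glue at a cut vertex with additive weights N; if A and B share two vertices u, v the
  product vanishes because ((psibar_u - psibar_v)(psi_u - psi_v))^2 = 0.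

  Adding hyperedges one at a time, a new edge either meets every component of a hyperforest in
  at most one vertex (the result is a hyperforest, and the factors of the components it meets
  glue with it), or meets a component in two vertices (it closes a cycle, and the product
  vanishes).  On a component C of a hyperforest the edges satisfy sum (card A - 1) = card C - 1,
  which turns the glued weight sum lambda_A (card A - 1) into lambda_gamma (card C - 1).
\<close>

section \<open>The Grassmann algebra as a ring\<close>

lemma finite_inversions:
  "finite T \<Longrightarrow> finite U \<Longrightarrow> finite {(t, u). t \<in> T \<and> u \<in> U \<and> u < t}"
  by (rule finite_subset[of _ "T \<times> U"]) auto

lemma gsign_Un_right:
  assumes "finite T" "finite U" "finite W" "U \<inter> W = {}"
  shows "gsign T (U \<union> W) = gsign T U * gsign T W"
proof -
  have "{(t, u). t \<in> T \<and> u \<in> U \<union> W \<and> u < t} =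
        {(t, u). t \<in> T \<and> u \<in> U \<and> u < t} \<union> {(t, u). t \<in> T \<and> u \<in> W \<and> u < t}" by auto
  with assms have "card {(t, u). t \<in> T \<and> u \<in> U \<union> W \<and> u < t} =
        card {(t, u). t \<in> T \<and> u \<in> U \<and> u < t} + card {(t, u). t \<in> T \<and> u \<in> W \<and> u < t}"
    by (simp only:) (intro card_Un_disjoint finite_inversions; auto)
  then show ?thesis unfolding gsign_def by (simp add: power_add)
qed

lemma gsign_Un_left:
  assumes "finite T" "finite U" "finite W" "T \<inter> U = {}"
  shows "gsign (T \<union> U) W = gsign T W * gsign U W"
proof -
  have "{(t, u). t \<in> T \<union> U \<and> u \<in> W \<and> u < t} =
        {(t, u). t \<in> T \<and> u \<in> W \<and> u < t} \<union> {(t, u). t \<in> U \<and> u \<in> W \<and> u < t}" by auto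
  with assms have "card {(t, u). t \<in> T \<union> U \<and> u \<in> W \<and> u < t} =
        card {(t, u). t \<in> T \<and> u \<in> W \<and> u < t} + card {(t, u). t \<in> U \<and> u \<in> W \<and> u < t}"
    by (simp only:) (intro card_Un_disjoint finite_inversions; auto)
  then show ?thesis unfolding gsign_def by (simp add: power_add)
qed

lemma gsign_cocycle:
  assumes "finite S" "T \<subseteq> R" "R \<subseteq> S"
  shows "gsign R (S - R) * gsign T (R - T) = gsign T (S - T) * gsign (R - T) (S - R)"
proof -
  have fin: "finite T" "finite (R - T)" "finite (S - R)"
    using assms by (auto intro: finite_subset)
  have "gsign R (S - R) = gsign T (S - R) * gsign (R - T) (S - R)"
    using gsign_Un_left[of T "R - T" "S - R"] fin assms(2) by (simp add: Un_absorb1)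
  moreover have "gsign T (S - T) = gsign T (R - T) * gsign T (S - R)"
  proof -
    have "S - T = (R - T) \<union> (S - R)" "(R - T) \<inter> (S - R) = {}" using assms by auto
    then show ?thesis using gsign_Un_right[of T "R - T" "S - R"] fin by simp
  qed
  ultimately show ?thesis by (simp add: mult_ac)
qed

lemma gsign_empty_left [simp]: "gsign {} U = 1"
  and gsign_empty_right [simp]: "gsign T {} = 1"
  by (simp_all add: gsign_def)

lemma gmult_assoc: "gmult (gmult x y) z = gmult x (gmult y z)"
proof
  fix S :: "('a::linorder \<times> bool) set"
  show "gmult (gmult x y) z S = gmult x (gmult y z) S"
  proof (cases "finite S")
    case fin: True
    have "gmult (gmult x y) z S = (\<Sum>(R, T)\<in>Sigma (Pow S) Pow.
        gsign R (S - R) * gsign T (R - T) * x T * y (R - T) * z (S - R))"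
      using fin unfolding gmult_def
      by (subst sum.Sigma[symmetric])
        (auto simp: sum_distrib_left sum_distrib_right mult.assoc intro!: sum.cong dest: finite_subset)
    also have "\<dots> = (\<Sum>(T, U)\<in>Sigma (Pow S) (\<lambda>T. Pow (S - T)).
        gsign T (S - T) * gsign U (S - T - U) * x T * y U * z (S - T - U))"
    proof (rule sum.reindex_bij_witness[where i = "\<lambda>(T, U). (T \<union> U, T)"
          and j = "\<lambda>(R, T). (T, R - T)"])
      fix a assume "a \<in> Sigma (Pow S) Pow"
      then obtain R T where a: "a = (R, T)" "R \<subseteq> S" "T \<subseteq> R" by auto
      then have "S - T - (R - T) = S - R" by auto
      with gsign_cocycle[OF fin a(3,2)] a show "(case case a of (R, T) \<Rightarrow> (T, R - T) of
            (T, U) \<Rightarrow> gsign T (S - T) * gsign U (S - T - U) * x T * y U * z (S - T - U)) =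
           (case a of (R, T) \<Rightarrow> gsign R (S - R) * gsign T (R - T) * x T * y (R - T) * z (S - R))"
        by simp
    qed auto
    also have "\<dots> = gmult x (gmult y z) S"
      using fin unfolding gmult_def
      by (subst sum.Sigma[symmetric]) (auto simp: sum_distrib_left mult_ac intro!: sum.cong
          dest: finite_subset)
    finally show ?thesis .
  qed (simp add: gmult_def)
qed

text \<open>Elements of the Grassmann algebra are the coefficient functions vanishing on infinite sets
  (products already do; imposing it on all elements makes gconst 1 a unit).\<close>

definition zero_on_infinite :: "'a grass \<Rightarrow> bool" where
  "zero_on_infinite x \<longleftrightarrow> (\<forall>S. infinite S \<longrightarrow> x S = 0)"

lemma zero_on_infinite_gmult: "zero_on_infinite (gmult x y)"
  by (simp add: zero_on_infinite_def gmult_def)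

lemma gmult_gconst_left:
  assumes "zero_on_infinite x"
  shows "gmult (gconst c) x = gscale c x"
proof
  fix S
  show "gmult (gconst c) x S = gscale c x S"
  proof (cases "finite S")
    case True
    then have "gmult (gconst c) x S
        = (\<Sum>T\<in>Pow S. gsign T (S - T) * (if T = {} then c else 0) * x (S - T))"
      unfolding gmult_def gconst_def by simp
    also have "\<dots> = (\<Sum>T\<in>Pow S. if T = {} then c * x S else 0)" by (rule sum.cong) auto
    finally show ?thesis using True by (simp add: gscale_def)
  qed (use assms in \<open>simp add: zero_on_infinite_def gmult_def gscale_def\<close>)
qed

lemma gmult_gconst_right:
  assumes "zero_on_infinite x"
  shows "gmult x (gconst c) = gscale c x"
proof
  fix S
  show "gmult x (gconst c) S = gscale c x S"
  proof (cases "finite S")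
    case True
    then have "gmult x (gconst c) S
        = (\<Sum>T\<in>Pow S. gsign T (S - T) * x T * (if S - T = {} then c else 0))"
      unfolding gmult_def gconst_def by simp
    also have "\<dots> = (\<Sum>T\<in>Pow S. if T = S then c * x S else 0)" by (rule sum.cong) auto
    finally show ?thesis using True by (simp add: gscale_def)
  qed (use assms in \<open>simp add: zero_on_infinite_def gmult_def gscale_def\<close>)
qed

lemma gmult_gadd_left: "gmult (gadd x y) z = gadd (gmult x z) (gmult y z)"
  and gmult_gadd_right: "gmult z (gadd x y) = gadd (gmult z x) (gmult z y)"
  by (simp_all add: gmult_def gadd_def fun_eq_iff algebra_simps sum.distrib)

typedef ('a::linorder) grassmann = "{x :: 'a grass. zero_on_infinite x}"
  by (rule exI[of _ "\<lambda>_. 0"]) (simp add: zero_on_infinite_def)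

setup_lifting type_definition_grassmann

instantiation grassmann :: (linorder) ring_1
begin

lift_definition zero_grassmann :: "'a grassmann" is "\<lambda>_. 0"
  by (simp add: zero_on_infinite_def)
lift_definition one_grassmann :: "'a grassmann" is "gconst 1"
  by (simp add: zero_on_infinite_def gconst_def)
lift_definition plus_grassmann :: "'a grassmann \<Rightarrow> 'a grassmann \<Rightarrow> 'a grassmann" is gadd
  by (simp add: zero_on_infinite_def gadd_def)
lift_definition minus_grassmann :: "'a grassmann \<Rightarrow> 'a grassmann \<Rightarrow> 'a grassmann" is gsub
  by (simp add: zero_on_infinite_def gsub_def)
lift_definition uminus_grassmann :: "'a grassmann \<Rightarrow> 'a grassmann" is "\<lambda>x S. - x S"
  by (simp add: zero_on_infinite_def)
lift_definition times_grassmann :: "'a grassmann \<Rightarrow> 'a grassmann \<Rightarrow> 'a grassmann" is gmult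
  by (rule zero_on_infinite_gmult)

instance
proof
  fix a b c :: "'a grassmann"
  show "a * b * c = a * (b * c)" by transfer (rule gmult_assoc)
  show "a + b + c = a + (b + c)" "a + b = b + a" "0 + a = a" "- a + a = 0" "a - b = a + - b"
    by (transfer; simp add: gadd_def gsub_def fun_eq_iff algebra_simps)+
  show "(a + b) * c = a * c + b * c" by transfer (rule gmult_gadd_left)
  show "a * (b + c) = a * b + a * c" by transfer (rule gmult_gadd_right)
  show "1 * a = a" by transfer (simp add: gmult_gconst_left gscale_def)
  show "a * 1 = a" by transfer (simp add: gmult_gconst_right gscale_def)
  show "(0::'a grassmann) \<noteq> 1" by transfer (simp add: gconst_def fun_eq_iff)
qed

end

lemma gmult_gen_left:
  "gmult (gen a) y S = (if finite S \<and> a \<in> S then gsign {a} (S - {a}) * y (S - {a}) else 0)"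
proof (cases "finite S")
  case True
  then have "gmult (gen a) y S
      = (\<Sum>T\<in>Pow S. gsign T (S - T) * (if T = {a} then 1 else 0) * y (S - T))"
    unfolding gmult_def gen_def by simp
  also have "\<dots> = (\<Sum>T\<in>Pow S. if {a} = T then gsign {a} (S - {a}) * y (S - {a}) else 0)"
    by (rule sum.cong) auto
  finally show ?thesis using True by simp
qed (simp add: gmult_def)

lemma gen_gmult_gen:
  "gmult (gen a) (gen b) = (\<lambda>S. if a \<noteq> b \<and> S = {a, b} then (if b < a then -1 else 1) else 0)"
proof
  fix S
  have "{(t, u). t \<in> {a} \<and> u \<in> {b} \<and> u < t} = (if b < a then {(a, b)} else {})" by auto
  then have "gsign {a} {b} = (if b < a then -1 else 1)" by (simp add: gsign_def)
  moreover have "S - {a} = {b} \<and> a \<in> S \<longleftrightarrow> a \<noteq> b \<and> S = {a, b}" by auto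
  ultimately show "gmult (gen a) (gen b) S
      = (if a \<noteq> b \<and> S = {a, b} then (if b < a then -1 else 1) else 0)"
    unfolding gmult_gen_left by (auto simp: gen_def)
qed

lift_definition generator :: "'a::linorder \<times> bool \<Rightarrow> 'a grassmann" is gen
  by (auto simp: zero_on_infinite_def gen_def)

lemma generator_anticommute: "generator a * generator b = - (generator b * generator a)"
  by transfer (auto simp: gen_gmult_gen fun_eq_iff insert_commute neq_iff)

lemma generator_square: "generator a * generator a = 0"
  by transfer (simp add: gen_gmult_gen)

section \<open>The even subalgebra\<close>

lemma card_inversions_swap:
  fixes T U :: "'a::linorder set"
  assumes "finite T" "finite U" "T \<inter> U = {}"
  shows "card {(t, u). t \<in> T \<and> u \<in> U \<and> u < t} + card {(u, t). u \<in> U \<and> t \<in> T \<and> t < u}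
         = card T * card U"
proof -
  have "{(u, t). u \<in> U \<and> t \<in> T \<and> t < u} = prod.swap ` {(t, u). t \<in> T \<and> u \<in> U \<and> t < u}"
    by auto
  then have swap: "card {(u, t). u \<in> U \<and> t \<in> T \<and> t < u} = card {(t, u). t \<in> T \<and> u \<in> U \<and> t < u}"
    by (simp add: card_image)
  have "T \<times> U = {(t, u). t \<in> T \<and> u \<in> U \<and> u < t} \<union> {(t, u). t \<in> T \<and> u \<in> U \<and> t < u}"
    using assms(3) by (auto simp: disjoint_iff) (metis not_less_iff_gr_or_eq)
  then have "card (T \<times> U)
      = card {(t, u). t \<in> T \<and> u \<in> U \<and> u < t} + card {(t, u). t \<in> T \<and> u \<in> U \<and> t < u}"
    using assms by (simp only:) (intro card_Un_disjoint; auto intro: finite_subset[of _ "T \<times> U"])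
  then show ?thesis using swap by (simp add: card_cartesian_product)
qed

lemma gsign_swap:
  assumes "finite T" "finite U" "T \<inter> U = {}" "even (card T)"
  shows "gsign U T = gsign T U"
proof -
  let ?a = "card {(t, u). t \<in> T \<and> u \<in> U \<and> u < t}"
  let ?b = "card {(u, t). u \<in> U \<and> t \<in> T \<and> t < u}"
  have "even (?a + ?b)" using card_inversions_swap[OF assms(1-3)] assms(4) by simp
  then have "even ?a = even ?b" by auto
  then show ?thesis unfolding gsign_def
    by (cases "even ?a") (auto simp: neg_one_even_power neg_one_odd_power)
qed

definition even_grass :: "'a grass \<Rightarrow> bool" where
  "even_grass x \<longleftrightarrow> zero_on_infinite x \<and> (\<forall>S. odd (card S) \<longrightarrow> x S = 0)"

lemma gmult_commute_even:
  assumes "even_grass x"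
  shows "gmult x y = gmult y x"
proof
  fix S :: "('a \<times> bool) set"
  show "gmult x y S = gmult y x S"
  proof (cases "finite S")
    case fin: True
    have "gmult y x S = (\<Sum>T\<in>Pow S. gsign T (S - T) * y T * x (S - T))"
      using fin by (simp add: gmult_def)
    also have "\<dots> = (\<Sum>T\<in>Pow S. gsign (S - T) (S - (S - T)) * y (S - T) * x (S - (S - T)))"
      by (rule sum.reindex_bij_witness[where i = "\<lambda>T. S - T" and j = "\<lambda>T. S - T"])
        (auto simp: Diff_Diff_Int Int_absorb1 Int_absorb2)
    also have "\<dots> = (\<Sum>T\<in>Pow S. gsign T (S - T) * x T * y (S - T))"
    proof (rule sum.cong[OF refl])
      fix T assume T: "T \<in> Pow S"
      then have compl: "S - (S - T) = T" by auto
      show "gsign (S - T) (S - (S - T)) * y (S - T) * x (S - (S - T))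
          = gsign T (S - T) * x T * y (S - T)"
      proof (cases "even (card T)")
        case True
        then have "gsign (S - T) T = gsign T (S - T)"
          using T fin by (intro gsign_swap) (auto intro: finite_subset)
        then show ?thesis unfolding compl by simp
      qed (use assms compl in \<open>simp add: even_grass_def\<close>)
    qed
    finally show ?thesis using fin by (simp add: gmult_def)
  qed (simp add: gmult_def)
qed

lemma even_grass_gmult:
  assumes "even_grass x" "even_grass y"
  shows "even_grass (gmult x y)"
  unfolding even_grass_def
proof (intro conjI allI impI zero_on_infinite_gmult)
  fix S :: "('a \<times> bool) set" assume odd: "odd (card S)"
  show "gmult x y S = 0"
  proof (cases "finite S")
    case fin: True
    have "gsign T (S - T) * x T * y (S - T) = 0" if "T \<in> Pow S" for T
    proof -
      have "card S = card T + card (S - T)" using that fin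
        by (simp add: card_Diff_subset card_mono finite_subset)
      then have "odd (card T) \<or> odd (card (S - T))" using odd by auto
      then show ?thesis using assms by (auto simp: even_grass_def)
    qed
    then have "(\<Sum>T\<in>Pow S. gsign T (S - T) * x T * y (S - T)) = 0" by (rule sum.neutral[OF ballI])
    then show ?thesis using fin by (simp add: gmult_def)
  qed (simp add: gmult_def)
qed

typedef ('a::linorder) grassmann_even = "{x :: 'a grass. even_grass x}"
  by (rule exI[of _ "\<lambda>_. 0"]) (simp add: even_grass_def zero_on_infinite_def)

setup_lifting type_definition_grassmann_even

instantiation grassmann_even :: (linorder) comm_ring_1
begin

lift_definition zero_grassmann_even :: "'a grassmann_even" is "\<lambda>_. 0"
  by (simp add: even_grass_def zero_on_infinite_def)
lift_definition one_grassmann_even :: "'a grassmann_even" is "gconst 1"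
  by (simp add: even_grass_def zero_on_infinite_def gconst_def)
lift_definition plus_grassmann_even :: "'a grassmann_even \<Rightarrow> 'a grassmann_even \<Rightarrow> 'a grassmann_even"
  is gadd by (simp add: even_grass_def zero_on_infinite_def gadd_def)
lift_definition minus_grassmann_even :: "'a grassmann_even \<Rightarrow> 'a grassmann_even \<Rightarrow> 'a grassmann_even"
  is gsub by (simp add: even_grass_def zero_on_infinite_def gsub_def)
lift_definition uminus_grassmann_even :: "'a grassmann_even \<Rightarrow> 'a grassmann_even" is "\<lambda>x S. - x S"
  by (simp add: even_grass_def zero_on_infinite_def)
lift_definition times_grassmann_even :: "'a grassmann_even \<Rightarrow> 'a grassmann_even \<Rightarrow> 'a grassmann_even"
  is gmult by (rule even_grass_gmult)

instance
proof
  fix a b c :: "'a grassmann_even"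
  show "a * b * c = a * (b * c)" by transfer (rule gmult_assoc)
  show "a * b = b * a" by transfer (rule gmult_commute_even)
  show "a + b + c = a + (b + c)" "a + b = b + a" "0 + a = a" "- a + a = 0" "a - b = a + - b"
    by (transfer; simp add: gadd_def gsub_def fun_eq_iff algebra_simps)+
  show "(a + b) * c = a * c + b * c" by transfer (rule gmult_gadd_left)
  show "1 * a = a" by transfer (simp add: gmult_gconst_left gscale_def even_grass_def)
  show "(0::'a grassmann_even) \<noteq> 1" by transfer (simp add: gconst_def fun_eq_iff)
qed

end

lift_definition to_grassmann :: "'a::linorder grassmann_even \<Rightarrow> 'a grassmann" is "\<lambda>x. x"
  by (simp add: even_grass_def)

lemma to_grassmann_mult: "to_grassmann (x * y) = to_grassmann x * to_grassmann y"
  and to_grassmann_minus: "to_grassmann (- x) = - to_grassmann x"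
  and to_grassmann_0: "to_grassmann 0 = 0"
  by (transfer; simp)+

lemma to_grassmann_inject: "to_grassmann x = to_grassmann y \<Longrightarrow> x = y"
  by transfer simp

lift_definition psibar_psi :: "'a::linorder \<Rightarrow> 'a \<Rightarrow> 'a grassmann_even"
  is "\<lambda>i j. gmult (psibar i) (psi j)"
  by (auto simp: even_grass_def zero_on_infinite_def psibar_def psi_def gen_gmult_gen card_insert_if)

lemma to_grassmann_psibar_psi:
  "to_grassmann (psibar_psi i j) = generator (i, True) * generator (j, False)"
  by transfer (simp add: psibar_def psi_def)

lemma generator_anticommute_left:
  "generator b * (generator c * x) = - (generator c * (generator b * x))"
proof -
  have "generator b * (generator c * x) = (generator b * generator c) * x" by (simp add: mult.assoc)
  also have "\<dots> = - (generator c * generator b) * x" by (simp only: generator_anticommute[of b c])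
  finally show ?thesis by (simp add: mult.assoc)
qed

lemma psibar_psi_same_row: "psibar_psi i j * psibar_psi i l = 0"
proof (rule to_grassmann_inject)
  let ?a = "generator (i, True)" and ?b = "generator (j, False)" and ?d = "generator (l, False)"
  have "?b * (?a * ?d) = - (?a * (?b * ?d))" by (rule generator_anticommute_left)
  then have "?a * ?b * (?a * ?d) = - (?a * ?a * (?b * ?d))" by (simp add: mult.assoc)
  then show "to_grassmann (psibar_psi i j * psibar_psi i l) = to_grassmann 0"
    by (simp add: to_grassmann_mult to_grassmann_psibar_psi to_grassmann_0 generator_square)
qed

lemma psibar_psi_same_col: "psibar_psi i j * psibar_psi k j = 0"
proof (rule to_grassmann_inject)
  let ?a = "generator (i, True)" and ?b = "generator (j, False)" and ?c = "generator (k, True)"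
  have "?b * (?c * ?b) = - (?c * (?b * ?b))" by (rule generator_anticommute_left)
  then show "to_grassmann (psibar_psi i j * psibar_psi k j) = to_grassmann 0"
    by (simp add: to_grassmann_mult to_grassmann_psibar_psi to_grassmann_0 generator_square mult.assoc)
qed

lemma psibar_psi_exchange: "psibar_psi i j * psibar_psi k l = - (psibar_psi i l * psibar_psi k j)"
proof (rule to_grassmann_inject)
  let ?a = "generator (i, True)" and ?b = "generator (j, False)"
    and ?c = "generator (k, True)" and ?d = "generator (l, False)"
  have "?a * ?b * (?c * ?d) = ?a * (?b * (?c * ?d))" by (simp only: mult.assoc)
  also have "\<dots> = ?a * (?c * (?d * ?b))"
    by (simp only: generator_anticommute_left[of "(j, False)"] generator_anticommute[of "(j, False)"]
        mult_minus_right minus_minus)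
  also have "\<dots> = - (?a * ?d * (?c * ?b))"
    by (simp only: generator_anticommute_left[of "(l, False)"] mult_minus_right minus_minus mult.assoc)
  finally show "to_grassmann (psibar_psi i j * psibar_psi k l)
      = to_grassmann (- (psibar_psi i l * psibar_psi k j))"
    by (simp add: to_grassmann_mult to_grassmann_minus to_grassmann_psibar_psi)
qed

section \<open>Gluing the polynomials f_A\<close>

definition tau_ev :: "'a::linorder set \<Rightarrow> 'a grassmann_even" where
  "tau_ev A = (\<Prod>k\<in>A. psibar_psi k k)"

definition off_diagonal :: "'a set \<Rightarrow> ('a \<times> 'a) set" where
  "off_diagonal A = {(i, j). i \<in> A \<and> j \<in> A \<and> i \<noteq> j}"

definition f_base :: "'a::linorder set \<Rightarrow> 'a grassmann_even" where
  "f_base A = (\<Sum>i\<in>A. tau_ev (A - {i}))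
     - (\<Sum>(i, j)\<in>off_diagonal A. psibar_psi i j * tau_ev (A - {i, j}))"

text \<open>The product (psibar_k - psibar_r)(psi_k - psi_r).\<close>
definition diff_pair :: "'a::linorder \<Rightarrow> 'a \<Rightarrow> 'a grassmann_even" where
  "diff_pair k r = psibar_psi k k - psibar_psi k r - psibar_psi r k + psibar_psi r r"

lemma finite_off_diagonal: "finite A \<Longrightarrow> finite (off_diagonal A)"
  unfolding off_diagonal_def by (rule finite_subset[of _ "A \<times> A"]) auto

lemma off_diagonal_singleton: "off_diagonal {r} = {}"
  by (auto simp: off_diagonal_def)

lemma sum_off_diagonal_row:
  assumes "finite A" "r \<in> A" "\<And>i j. (i, j) \<in> off_diagonal A \<Longrightarrow> i \<noteq> r \<Longrightarrow> h i j = 0"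
  shows "(\<Sum>(i, j)\<in>off_diagonal A. h i j) = (\<Sum>j\<in>A - {r}. h r j)"
proof -
  have "(\<Sum>(i, j)\<in>off_diagonal A. h i j) = (\<Sum>(i, j)\<in>Pair r ` (A - {r}). h i j)"
    using assms by (intro sum.mono_neutral_right finite_off_diagonal)
      (auto simp: off_diagonal_def)
  then show ?thesis by (simp add: sum.reindex inj_on_def)
qed

lemma sum_off_diagonal_col:
  assumes "finite A" "r \<in> A" "\<And>i j. (i, j) \<in> off_diagonal A \<Longrightarrow> j \<noteq> r \<Longrightarrow> h i j = 0"
  shows "(\<Sum>(i, j)\<in>off_diagonal A. h i j) = (\<Sum>i\<in>A - {r}. h i r)"
proof -
  have "(\<Sum>(i, j)\<in>off_diagonal A. h i j) = (\<Sum>(i, j)\<in>(\<lambda>i. (i, r)) ` (A - {r}). h i j)"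
    using assms by (intro sum.mono_neutral_right finite_off_diagonal)
      (auto simp: off_diagonal_def)
  then show ?thesis by (simp add: sum.reindex inj_on_def)
qed

lemma tau_ev_remove: "finite X \<Longrightarrow> r \<in> X \<Longrightarrow> tau_ev X = psibar_psi r r * tau_ev (X - {r})"
  unfolding tau_ev_def by (rule prod.remove)

lemma tau_ev_insert: "finite X \<Longrightarrow> k \<notin> X \<Longrightarrow> tau_ev (insert k X) = psibar_psi k k * tau_ev X"
  unfolding tau_ev_def by simp

lemma tau_ev_empty [simp]: "tau_ev {} = 1"
  by (simp add: tau_ev_def)

lemma tau_ev_remove2:
  assumes "finite A" "r \<in> A" "r \<noteq> j"
  shows "psibar_psi r r * tau_ev (A - {r, j}) = tau_ev (A - {j})"
proof -
  have "tau_ev (A - {j}) = psibar_psi r r * tau_ev (A - {j} - {r})"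
    using assms by (intro tau_ev_remove) auto
  moreover have "A - {j} - {r} = A - {r, j}" by auto
  ultimately show ?thesis by simp
qed

lemma tau_ev_mult_row_zero:
  assumes "finite X" "r \<in> X"
  shows "tau_ev X * psibar_psi r j = 0"
proof -
  have "tau_ev X * psibar_psi r j = tau_ev (X - {r}) * (psibar_psi r r * psibar_psi r j)"
    using assms by (simp add: tau_ev_remove mult_ac)
  then show ?thesis by (simp add: psibar_psi_same_row)
qed

lemma tau_ev_mult_col_zero:
  assumes "finite X" "r \<in> X"
  shows "tau_ev X * psibar_psi j r = 0"
proof -
  have "tau_ev X * psibar_psi j r = tau_ev (X - {r}) * (psibar_psi r r * psibar_psi j r)"
    using assms by (simp add: tau_ev_remove mult_ac)
  then show ?thesis by (simp add: psibar_psi_same_col)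
qed

lemma sum_tau_ev_mult:
  assumes "finite A" "r \<in> A" "\<And>X. finite X \<Longrightarrow> r \<in> X \<Longrightarrow> tau_ev X * x = 0"
  shows "(\<Sum>i\<in>A. tau_ev (A - {i})) * x = tau_ev (A - {r}) * x"
proof -
  have "(\<Sum>i\<in>A. tau_ev (A - {i})) * x = tau_ev (A - {r}) * x + (\<Sum>i\<in>A - {r}. tau_ev (A - {i}) * x)"
    using assms(1,2) by (simp add: sum.remove distrib_right sum_distrib_right)
  also have "(\<Sum>i\<in>A - {r}. tau_ev (A - {i}) * x) = 0"
    using assms(1,2) by (intro sum.neutral ballI assms(3)) auto
  finally show ?thesis by simp
qed

lemma off_diagonal_term_mult_col:
  assumes "finite A" "r \<in> A" "i \<noteq> r"
  shows "psibar_psi i j * tau_ev (A - {i, j}) * psibar_psi k r = 0"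
proof (cases "j = r")
  case True
  then have "psibar_psi i j * tau_ev (A - {i, j}) * psibar_psi k r
      = tau_ev (A - {i, j}) * (psibar_psi i r * psibar_psi k r)" by (simp add: mult_ac)
  then show ?thesis by (simp add: psibar_psi_same_col)
next
  case False
  then have "tau_ev (A - {i, j}) * psibar_psi k r = 0"
    using assms by (intro tau_ev_mult_col_zero) auto
  then show ?thesis by (simp add: mult.assoc)
qed

lemma off_diagonal_term_mult_row:
  assumes "finite A" "r \<in> A" "j \<noteq> r"
  shows "psibar_psi i j * tau_ev (A - {i, j}) * psibar_psi r k = 0"
proof (cases "i = r")
  case True
  then have "psibar_psi i j * tau_ev (A - {i, j}) * psibar_psi r k
      = tau_ev (A - {i, j}) * (psibar_psi r j * psibar_psi r k)" by (simp add: mult_ac)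
  then show ?thesis by (simp add: psibar_psi_same_row)
next
  case False
  then have "tau_ev (A - {i, j}) * psibar_psi r k = 0"
    using assms by (intro tau_ev_mult_row_zero) auto
  then show ?thesis by (simp add: mult.assoc)
qed

lemma sum_off_diagonal_mult:
  "(\<Sum>(i, j)\<in>P. psibar_psi i j * tau_ev (A - {i, j})) * x
    = (\<Sum>(i, j)\<in>P. psibar_psi i j * tau_ev (A - {i, j}) * x)"
  by (simp add: sum_distrib_right case_prod_unfold)

lemma f_base_mult_diag:
  assumes fin: "finite A" and r: "r \<in> A"
  shows "f_base A * psibar_psi r r = tau_ev A"
proof -
  have "psibar_psi i j * tau_ev (A - {i, j}) * psibar_psi r r = 0" if "(i, j) \<in> off_diagonal A" for i j
    using that off_diagonal_term_mult_col[OF fin r] off_diagonal_term_mult_row[OF fin r]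
    by (cases "i = r") (auto simp: off_diagonal_def)
  then have "(\<Sum>(i, j)\<in>off_diagonal A. psibar_psi i j * tau_ev (A - {i, j})) * psibar_psi r r = 0"
    unfolding sum_off_diagonal_mult by (intro sum.neutral) auto
  moreover have "(\<Sum>i\<in>A. tau_ev (A - {i})) * psibar_psi r r = tau_ev (A - {r}) * psibar_psi r r"
    using fin r by (rule sum_tau_ev_mult) (rule tau_ev_mult_row_zero)
  moreover have "tau_ev (A - {r}) * psibar_psi r r = tau_ev A"
    using fin r by (simp add: tau_ev_remove[of A r] mult.commute)
  ultimately show ?thesis unfolding f_base_def left_diff_distrib by simp
qed

lemma f_base_mult_col:
  assumes fin: "finite A" and r: "r \<in> A"
  shows "f_base A * psibar_psi k r = (\<Sum>j\<in>A. psibar_psi k j * tau_ev (A - {j}))"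
proof -
  have "(\<Sum>(i, j)\<in>off_diagonal A. psibar_psi i j * tau_ev (A - {i, j})) * psibar_psi k r
      = (\<Sum>j\<in>A - {r}. psibar_psi r j * tau_ev (A - {r, j}) * psibar_psi k r)"
    unfolding sum_off_diagonal_mult
    by (rule sum_off_diagonal_row[OF fin r off_diagonal_term_mult_col[OF fin r]])
  also have "\<dots> = (\<Sum>j\<in>A - {r}. - (psibar_psi k j * tau_ev (A - {j})))"
  proof (rule sum.cong[OF refl])
    fix j assume "j \<in> A - {r}"
    have "psibar_psi r j * tau_ev (A - {r, j}) * psibar_psi k r
        = tau_ev (A - {r, j}) * (psibar_psi r j * psibar_psi k r)" by (simp add: mult_ac)
    also have "\<dots> = tau_ev (A - {r, j}) * - (psibar_psi r r * psibar_psi k j)"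
      by (simp only: psibar_psi_exchange[of r j k r])
    also have "\<dots> = - (psibar_psi k j * (psibar_psi r r * tau_ev (A - {r, j})))"
      by (simp add: mult_ac)
    also have "psibar_psi r r * tau_ev (A - {r, j}) = tau_ev (A - {j})"
      using \<open>j \<in> A - {r}\<close> fin r by (intro tau_ev_remove2) auto
    finally show "psibar_psi r j * tau_ev (A - {r, j}) * psibar_psi k r
        = - (psibar_psi k j * tau_ev (A - {j}))" .
  qed
  moreover have "(\<Sum>i\<in>A. tau_ev (A - {i})) * psibar_psi k r = tau_ev (A - {r}) * psibar_psi k r"
    using fin r by (simp add: sum_tau_ev_mult tau_ev_mult_col_zero)
  moreover have "(\<Sum>j\<in>A. psibar_psi k j * tau_ev (A - {j}))
      = psibar_psi k r * tau_ev (A - {r}) + (\<Sum>j\<in>A - {r}. psibar_psi k j * tau_ev (A - {j}))"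
    using fin r by (simp add: sum.remove)
  ultimately show ?thesis
    unfolding f_base_def left_diff_distrib by (simp add: sum_negf mult.commute)
qed

lemma f_base_mult_row:
  assumes fin: "finite A" and r: "r \<in> A"
  shows "f_base A * psibar_psi r k = (\<Sum>i\<in>A. psibar_psi i k * tau_ev (A - {i}))"
proof -
  have "(\<Sum>(i, j)\<in>off_diagonal A. psibar_psi i j * tau_ev (A - {i, j})) * psibar_psi r k
      = (\<Sum>i\<in>A - {r}. psibar_psi i r * tau_ev (A - {i, r}) * psibar_psi r k)"
    unfolding sum_off_diagonal_mult
    by (rule sum_off_diagonal_col[OF fin r off_diagonal_term_mult_row[OF fin r]])
  also have "\<dots> = (\<Sum>i\<in>A - {r}. - (psibar_psi i k * tau_ev (A - {i})))"
  proof (rule sum.cong[OF refl])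
    fix i assume "i \<in> A - {r}"
    then have "psibar_psi r r * tau_ev (A - {r, i}) = tau_ev (A - {i})"
      using fin r by (intro tau_ev_remove2) auto
    moreover have "psibar_psi i r * tau_ev (A - {i, r}) * psibar_psi r k
        = tau_ev (A - {r, i}) * (psibar_psi i r * psibar_psi r k)" by (simp add: mult_ac insert_commute)
    ultimately show "psibar_psi i r * tau_ev (A - {i, r}) * psibar_psi r k
        = - (psibar_psi i k * tau_ev (A - {i}))"
      by (simp add: psibar_psi_exchange[of i r r k] mult_ac)
  qed
  moreover have "(\<Sum>i\<in>A. tau_ev (A - {i})) * psibar_psi r k = tau_ev (A - {r}) * psibar_psi r k"
    using fin r by (simp add: sum_tau_ev_mult tau_ev_mult_row_zero)
  moreover have "(\<Sum>i\<in>A. psibar_psi i k * tau_ev (A - {i}))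
      = psibar_psi r k * tau_ev (A - {r}) + (\<Sum>i\<in>A - {r}. psibar_psi i k * tau_ev (A - {i}))"
    using fin r by (simp add: sum.remove)
  ultimately show ?thesis
    unfolding f_base_def left_diff_distrib by (simp add: sum_negf mult.commute)
qed

lemma sum_tau_ev_insert:
  assumes "finite A" "k \<notin> A"
  shows "(\<Sum>i\<in>insert k A. tau_ev (insert k A - {i})) = tau_ev A + psibar_psi k k * (\<Sum>i\<in>A. tau_ev (A - {i}))"
proof -
  have "tau_ev (insert k A - {i}) = psibar_psi k k * tau_ev (A - {i})" if "i \<in> A" for i
  proof -
    have "insert k A - {i} = insert k (A - {i})" using that assms by auto
    then show ?thesis using assms by (simp add: tau_ev_insert)
  qed
  moreover have "insert k A - {k} = A" using assms by auto
  ultimately show ?thesis using assms by (simp add: sum_distrib_left)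
qed

lemma sum_off_diagonal_insert:
  assumes fin: "finite A" and k: "k \<notin> A"
  shows "(\<Sum>(i, j)\<in>off_diagonal (insert k A). psibar_psi i j * tau_ev (insert k A - {i, j}))
    = psibar_psi k k * (\<Sum>(i, j)\<in>off_diagonal A. psibar_psi i j * tau_ev (A - {i, j}))
      + (\<Sum>j\<in>A. psibar_psi k j * tau_ev (A - {j})) + (\<Sum>i\<in>A. psibar_psi i k * tau_ev (A - {i}))"
proof -
  let ?h = "\<lambda>(i, j). psibar_psi i j * tau_ev (insert k A - {i, j})"
  have split: "off_diagonal (insert k A) = off_diagonal A \<union> (Pair k ` A \<union> (\<lambda>i. (i, k)) ` A)"
    using k by (auto simp: off_diagonal_def)
  have "sum ?h (off_diagonal (insert k A))
      = sum ?h (off_diagonal A) + (sum ?h (Pair k ` A) + sum ?h ((\<lambda>i. (i, k)) ` A))"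
    unfolding split using fin k
    by (subst sum.union_disjoint, simp_all add: finite_off_diagonal,
        force simp: off_diagonal_def, subst sum.union_disjoint) auto
  also have "sum ?h (off_diagonal A)
      = psibar_psi k k * (\<Sum>(i, j)\<in>off_diagonal A. psibar_psi i j * tau_ev (A - {i, j}))"
    unfolding sum_distrib_left
  proof (rule sum.cong[OF refl])
    fix p assume "p \<in> off_diagonal A"
    then obtain i j where ij: "p = (i, j)" "i \<in> A" "j \<in> A" by (auto simp: off_diagonal_def)
    then have "insert k A - {i, j} = insert k (A - {i, j})" using k by auto
    then show "?h p = psibar_psi k k * (case p of (i, j) \<Rightarrow> psibar_psi i j * tau_ev (A - {i, j}))"
      using fin k ij by (simp add: tau_ev_insert mult_ac)
  qed
  also have "sum ?h (Pair k ` A) = (\<Sum>j\<in>A. psibar_psi k j * tau_ev (insert k A - {k, j}))"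
    by (simp add: sum.reindex inj_on_def)
  also have "\<dots> = (\<Sum>j\<in>A. psibar_psi k j * tau_ev (A - {j}))"
  proof -
    have "insert k A - {k, j} = A - {j}" for j using k by auto
    then show ?thesis by (intro sum.cong refl) (simp only:)
  qed
  also have "sum ?h ((\<lambda>i. (i, k)) ` A) = (\<Sum>i\<in>A. psibar_psi i k * tau_ev (insert k A - {i, k}))"
    by (simp add: sum.reindex inj_on_def)
  also have "\<dots> = (\<Sum>i\<in>A. psibar_psi i k * tau_ev (A - {i}))"
  proof -
    have "insert k A - {i, k} = A - {i}" for i using k by auto
    then show ?thesis by (intro sum.cong refl) (simp only:)
  qed
  finally show ?thesis by (simp add: add.assoc)
qed

lemma f_base_insert:
  assumes fin: "finite A" and r: "r \<in> A" and k: "k \<notin> A"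
  shows "f_base (insert k A) = f_base A * diff_pair k r"
proof -
  have "f_base (insert k A) = tau_ev A + psibar_psi k k * f_base A
      - (\<Sum>j\<in>A. psibar_psi k j * tau_ev (A - {j})) - (\<Sum>i\<in>A. psibar_psi i k * tau_ev (A - {i}))"
    unfolding f_base_def sum_tau_ev_insert[OF fin k] sum_off_diagonal_insert[OF fin k]
    by (simp add: algebra_simps)
  also have "\<dots> = f_base A * psibar_psi k k - f_base A * psibar_psi k r
      - f_base A * psibar_psi r k + f_base A * psibar_psi r r"
    using f_base_mult_diag[OF fin r] f_base_mult_col[OF fin r] f_base_mult_row[OF fin r]
    by (simp add: algebra_simps)
  finally show ?thesis by (simp add: diff_pair_def algebra_simps)
qed

lemma f_base_singleton [simp]: "f_base {r} = 1"
  by (simp add: f_base_def off_diagonal_singleton)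

lemma f_base_Un:
  assumes "finite A" "finite B" "v \<in> A" "A \<inter> B = {}"
  shows "f_base (A \<union> B) = f_base A * (\<Prod>k\<in>B. diff_pair k v)"
  using assms(2,4)
proof (induction B rule: finite_induct)
  case (insert k B)
  then have "f_base (insert k (A \<union> B)) = f_base (A \<union> B) * diff_pair k v"
    using assms(1,3) by (intro f_base_insert) auto
  with insert show ?case by (simp add: mult_ac)
qed simp

lemma f_base_glue:
  assumes "finite A" "finite B" "A \<inter> B = {v}"
  shows "f_base A * f_base B = f_base (A \<union> B)"
proof -
  have v: "v \<in> A" "v \<in> B" using assms(3) by auto
  have "f_base B = f_base ({v} \<union> (B - {v}))" using v by (simp add: insert_absorb)
  also have "\<dots> = (\<Prod>k\<in>B - {v}. diff_pair k v)"
    using assms(2) by (subst f_base_Un) auto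
  finally have "f_base A * f_base B = f_base A * (\<Prod>k\<in>B - {v}. diff_pair k v)" by simp
  also have "\<dots> = f_base (A \<union> (B - {v}))" using assms v by (subst f_base_Un) auto
  also have "A \<union> (B - {v}) = A \<union> B" using v by auto
  finally show ?thesis .
qed

lemma diff_pair_square:
  assumes "u \<noteq> v"
  shows "diff_pair u v * diff_pair u v = 0"
proof -
  let ?a = "psibar_psi u u" and ?b = "psibar_psi u v" and ?c = "psibar_psi v u" and ?d = "psibar_psi v v"
  have "diff_pair u v * diff_pair u v = ?a * ?d + ?b * ?c + ?b * ?c + ?a * ?d"
    unfolding diff_pair_def
    by (simp add: algebra_simps psibar_psi_same_row psibar_psi_same_col)
  also have "?b * ?c = - (?a * ?d)" by (rule psibar_psi_exchange)
  finally show ?thesis by simp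
qed

lemma f_base_overlap:
  assumes "finite A" "finite B" "u \<in> A" "v \<in> A" "u \<in> B" "v \<in> B" "u \<noteq> v"
  shows "f_base A * f_base B = 0"
proof -
  have "f_base X = f_base (X - {u}) * diff_pair u v" if "finite X" "u \<in> X" "v \<in> X" for X
    using f_base_insert[of "X - {u}" v u] that assms(7) by (simp add: insert_absorb)
  then have "f_base A * f_base B = f_base (A - {u}) * f_base (B - {u}) * (diff_pair u v * diff_pair u v)"
    using assms by (simp add: mult_ac)
  then show ?thesis by (simp add: diff_pair_square[OF assms(7)])
qed

lemma tau_ev_overlap:
  assumes "finite A" "finite B" "v \<in> A" "v \<in> B"
  shows "tau_ev A * tau_ev B = 0"
proof -
  have "tau_ev A * tau_ev B = tau_ev (A - {v}) * tau_ev (B - {v}) * (psibar_psi v v * psibar_psi v v)"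
    using assms by (simp add: tau_ev_remove[of A v] tau_ev_remove[of B v] mult_ac)
  then show ?thesis by (simp add: psibar_psi_same_row)
qed

lift_definition scalar :: "complex \<Rightarrow> 'a::linorder grassmann_even" is gconst
  by (simp add: even_grass_def zero_on_infinite_def gconst_def)

lemma scalar_add: "scalar (a + b) = scalar a + scalar b"
  and scalar_0: "scalar 0 = 0"
  by (transfer; simp add: gconst_def gadd_def fun_eq_iff)+

text \<open>With N = \<lambda> (card A - 1) this is fA \<lambda> A.\<close>
definition f_ev :: "complex \<Rightarrow> 'a::linorder set \<Rightarrow> 'a grassmann_even" where
  "f_ev N A = f_base A - scalar N * tau_ev A"

lemma f_ev_singleton: "f_ev 0 {u} = 1"
  by (simp add: f_ev_def scalar_0)

lemma f_ev_mult:
  "f_ev N A * f_ev M B = f_base A * f_base B - scalar M * (f_base A * tau_ev B)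
     - scalar N * (f_base B * tau_ev A) + scalar N * scalar M * (tau_ev A * tau_ev B)"
  unfolding f_ev_def by (simp add: algebra_simps)

lemma mult_tau_ev:
  assumes "finite B" "v \<in> B"
  shows "x * tau_ev B = x * f_base B * psibar_psi v v"
  using f_base_mult_diag[OF assms] by (simp add: mult.assoc)

lemma f_ev_glue:
  assumes "finite A" "finite B" "A \<inter> B = {v}"
  shows "f_ev N A * f_ev M B = f_ev (N + M) (A \<union> B)"
proof -
  have v: "v \<in> A" "v \<in> B" using assms(3) by auto
  have glue: "f_base A * f_base B = f_base (A \<union> B)" using assms by (rule f_base_glue)
  then have "f_base A * tau_ev B = tau_ev (A \<union> B)" "f_base B * tau_ev A = tau_ev (A \<union> B)"
    using mult_tau_ev[of B v "f_base A"] mult_tau_ev[of A v "f_base B"]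
      f_base_mult_diag[of "A \<union> B" v] assms v by (simp_all add: mult.commute)
  moreover have "tau_ev A * tau_ev B = 0" using assms v by (intro tau_ev_overlap)
  ultimately show ?thesis
    unfolding f_ev_mult glue by (simp add: f_ev_def scalar_add algebra_simps)
qed

lemma f_ev_overlap:
  assumes "finite A" "finite B" "u \<in> A" "v \<in> A" "u \<in> B" "v \<in> B" "u \<noteq> v"
  shows "f_ev N A * f_ev M B = 0"
proof -
  have overlap: "f_base A * f_base B = 0" using assms by (rule f_base_overlap)
  then have "f_base A * tau_ev B = 0" "f_base B * tau_ev A = 0"
    using mult_tau_ev[of B v "f_base A"] mult_tau_ev[of A v "f_base B"] assms
    by (simp_all add: mult.commute)
  moreover have "tau_ev A * tau_ev B = 0" using assms by (intro tau_ev_overlap)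
  ultimately show ?thesis unfolding f_ev_mult overlap by simp
qed

section \<open>Walks, cycles and components of hypergraphs\<close>

definition hyper_adj :: "'a set set \<Rightarrow> 'a \<Rightarrow> 'a \<Rightarrow> bool" where
  "hyper_adj F x y \<longleftrightarrow> (\<exists>A\<in>F. x \<in> A \<and> y \<in> A)"

lemma hyper_adj_sym: "hyper_adj F x y \<Longrightarrow> hyper_adj F y x"
  by (auto simp: hyper_adj_def)

lemma is_walk_Cons:
  "is_walk F (v # vs) (A # es) \<longleftrightarrow>
    A \<in> F \<and> v \<in> A \<and> vs \<noteq> [] \<and> hd vs \<in> A \<and> is_walk F vs es"
proof
  assume w: "is_walk F (v # vs) (A # es)"
  then have l: "length vs = Suc (length es)" by (simp add: is_walk_def)
  then have ne: "vs \<noteq> []" by auto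
  have all: "\<forall>i<length (A # es).
      (A # es) ! i \<in> F \<and> (v # vs) ! i \<in> (A # es) ! i \<and> (v # vs) ! Suc i \<in> (A # es) ! i"
    using w by (simp add: is_walk_def)
  have h0: "A \<in> F \<and> v \<in> A \<and> vs ! 0 \<in> A" using all[rule_format, of 0] by simp
  have "\<forall>i<length es. es ! i \<in> F \<and> vs ! i \<in> es ! i \<and> vs ! Suc i \<in> es ! i"
  proof (intro allI impI)
    fix i assume "i < length es"
    then have "Suc i < length (A # es)" by simp
    then show "es ! i \<in> F \<and> vs ! i \<in> es ! i \<and> vs ! Suc i \<in> es ! i"
      using all[rule_format, of "Suc i"] by simp
  qed
  then show "A \<in> F \<and> v \<in> A \<and> vs \<noteq> [] \<and> hd vs \<in> A \<and> is_walk F vs es"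
    using h0 ne l by (simp add: is_walk_def hd_conv_nth)
next
  assume a: "A \<in> F \<and> v \<in> A \<and> vs \<noteq> [] \<and> hd vs \<in> A \<and> is_walk F vs es"
  show "is_walk F (v # vs) (A # es)" unfolding is_walk_def
  proof (rule conjI; (intro allI impI)?)
    show "length (v # vs) = Suc (length (A # es))" using a by (simp add: is_walk_def)
    fix i assume i: "i < length (A # es)"
    show "(A # es) ! i \<in> F \<and> (v # vs) ! i \<in> (A # es) ! i \<and> (v # vs) ! Suc i \<in> (A # es) ! i"
    proof (cases i)
      case 0 then show ?thesis using a by (simp add: hd_conv_nth[symmetric])
    next
      case (Suc j) then show ?thesis using a i by (simp add: is_walk_def)
    qed
  qed
qed

lemma is_walk_Nil: "is_walk F vs [] \<longleftrightarrow> (\<exists>v. vs = [v])"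
  by (auto simp: is_walk_def length_Suc_conv)

lemma is_walk_nonempty: "is_walk F vs es \<Longrightarrow> vs \<noteq> []"
  by (auto simp: is_walk_def)

lemma is_walk_mono: "is_walk F vs es \<Longrightarrow> F \<subseteq> G \<Longrightarrow> is_walk G vs es"
  by (auto simp: is_walk_def)

lemma is_walk_rtranclp: "is_walk F vs es \<Longrightarrow> (hyper_adj F)\<^sup>*\<^sup>* (hd vs) (last vs)"
proof (induction es arbitrary: vs)
  case Nil then show ?case by (auto simp: is_walk_Nil)
next
  case (Cons A es)
  then obtain v vs' where vs: "vs = v # vs'" by (cases vs) (auto simp: is_walk_def)
  then have a: "A \<in> F" "v \<in> A" "vs' \<noteq> []" "hd vs' \<in> A" "is_walk F vs' es"
    using Cons.prems by (auto simp: is_walk_Cons)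
  have "hyper_adj F v (hd vs')" using a by (auto simp: hyper_adj_def)
  moreover have "(hyper_adj F)\<^sup>*\<^sup>* (hd vs') (last vs')" using Cons.IH a by blast
  ultimately show ?case using vs a by (auto intro: converse_rtranclp_into_rtranclp)
qed

lemma rtranclp_imp_walk_connected: "(hyper_adj F)\<^sup>*\<^sup>* u v \<Longrightarrow> walk_connected F u v"
proof (induction rule: converse_rtranclp_induct)
  case base
  have "is_walk F [v] []" by (simp add: is_walk_def)
  then show ?case unfolding walk_connected_def by force
next
  case (step x y)
  then obtain vs es where w: "is_walk F vs es" "hd vs = y" "last vs = v"
    by (auto simp: walk_connected_def)
  obtain A where A: "A \<in> F" "x \<in> A" "y \<in> A" using step by (auto simp: hyper_adj_def)
  have ne: "vs \<noteq> []" using w(1) by (rule is_walk_nonempty)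
  have "is_walk F (x # vs) (A # es)" using A w ne by (simp add: is_walk_Cons)
  then show ?case unfolding walk_connected_def using w ne by force
qed

lemma walk_connected_iff: "walk_connected F u v \<longleftrightarrow> (hyper_adj F)\<^sup>*\<^sup>* u v"
  using is_walk_rtranclp rtranclp_imp_walk_connected unfolding walk_connected_def by metis

lemma rtranclp_hyper_adj_sym: "(hyper_adj F)\<^sup>*\<^sup>* u v \<Longrightarrow> (hyper_adj F)\<^sup>*\<^sup>* v u"
proof (induction rule: rtranclp_induct)
  case (step y z)
  then show ?case by (meson converse_rtranclp_into_rtranclp hyper_adj_sym)
qed simp

inductive simple_walk :: "'a set set \<Rightarrow> 'a list \<Rightarrow> 'a set list \<Rightarrow> bool" for F where
  single: "simple_walk F [v] []"
| cons: "simple_walk F vs es \<Longrightarrow> v \<notin> set vs \<Longrightarrow> A \<in> F \<Longrightarrow> A \<notin> set es \<Longrightarrow>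
    v \<in> A \<Longrightarrow> hd vs \<in> A \<Longrightarrow> simple_walk F (v # vs) (A # es)"

lemma simple_walk_is_walk:
  "simple_walk F vs es \<Longrightarrow> is_walk F vs es \<and> distinct vs \<and> distinct es \<and> vs \<noteq> []"
proof (induction rule: simple_walk.induct)
  case (single v) then show ?case by (simp add: is_walk_def)
next
  case (cons vs es v A) then show ?case by (simp add: is_walk_Cons)
qed

lemma simple_walk_drop:
  "simple_walk F vs es \<Longrightarrow> k \<le> length es \<Longrightarrow> simple_walk F (drop k vs) (drop k es)"
proof (induction arbitrary: k rule: simple_walk.induct)
  case (single v) then show ?case by (simp add: simple_walk.single)
next
  case (cons vs es v A)
  show ?case
  proof (cases k)
    case 0 then show ?thesis using cons by (simp add: simple_walk.cons)
  next
    case (Suc j) then show ?thesis using cons by simp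
  qed
qed

lemma distinct_nth_notin_drop: "distinct xs \<Longrightarrow> k < length xs \<Longrightarrow> xs ! k \<notin> set (drop (Suc k) xs)"
  by (auto simp: in_set_conv_nth nth_eq_iff_index_eq)

text \<open>Extending a simple walk by a step x -- y along A: if x is already on the walk, or A is
  already used, the walk is cut at that point instead.\<close>

lemma rtranclp_imp_simple_walk:
  "(hyper_adj F)\<^sup>*\<^sup>* u w \<Longrightarrow> \<exists>vs es. simple_walk F vs es \<and> hd vs = u \<and> last vs = w"
proof (induction rule: converse_rtranclp_induct)
  case base then show ?case using simple_walk.single by force
next
  case (step x y)
  then obtain vs es where p: "simple_walk F vs es" "hd vs = y" "last vs = w" by blast
  obtain A where A: "A \<in> F" "x \<in> A" "y \<in> A" using step by (auto simp: hyper_adj_def)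
  have pr: "is_walk F vs es" "distinct vs" "distinct es" "vs \<noteq> []"
    using simple_walk_is_walk[OF p(1)] by auto
  have len: "length vs = Suc (length es)" using pr by (simp add: is_walk_def)
  show ?case
  proof (cases "x \<in> set vs")
    case True
    then obtain k where k: "k < length vs" "vs ! k = x" by (auto simp: in_set_conv_nth)
    have "simple_walk F (drop k vs) (drop k es)" using k len by (intro simple_walk_drop p(1)) auto
    moreover have "hd (drop k vs) = x" using k by (simp add: hd_drop_conv_nth)
    moreover have "last (drop k vs) = w" using k p(3) by simp
    ultimately show ?thesis by blast
  next
    case xn: False
    show ?thesis
    proof (cases "A \<in> set es")
      case True
      then obtain k where k: "k < length es" "es ! k = A" by (auto simp: in_set_conv_nth)
      have sd: "simple_walk F (drop (Suc k) vs) (drop (Suc k) es)"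
        using k len by (intro simple_walk_drop p(1)) auto
      have hd: "hd (drop (Suc k) vs) = vs ! Suc k" using k len by (simp add: hd_drop_conv_nth)
      have "vs ! Suc k \<in> A" using pr(1) k by (auto simp: is_walk_def)
      moreover have "x \<notin> set (drop (Suc k) vs)" using xn by (meson in_set_dropD)
      moreover have "A \<notin> set (drop (Suc k) es)"
        using distinct_nth_notin_drop[OF pr(3) k(1)] k by simp
      ultimately have "simple_walk F (x # drop (Suc k) vs) (A # drop (Suc k) es)"
        using sd A hd by (intro simple_walk.cons) auto
      moreover have "last (drop (Suc k) vs) = w" using k len p(3) by simp
      ultimately show ?thesis using k len by (intro exI[of _ "x # drop (Suc k) vs"]) auto
    next
      case False
      then have "simple_walk F (x # vs) (A # es)" using p A xn by (intro simple_walk.cons) auto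
      then show ?thesis using p pr by (intro exI[of _ "x # vs"]) auto
    qed
  qed
qed

lemma is_cycle_mono: "is_cycle F vs es \<Longrightarrow> F \<subseteq> G \<Longrightarrow> is_cycle G vs es"
  by (auto simp: is_cycle_def intro: is_walk_mono)

lemma hyperforest_mono: "hyperforest G \<Longrightarrow> F \<subseteq> G \<Longrightarrow> hyperforest F"
  unfolding hyperforest_def using is_cycle_mono by blast

lemma hyperforest_empty: "hyperforest ({} :: 'a set set)"
proof -
  have "es = []" if "is_walk {} vs es" for vs :: "'a list" and es
    using that by (cases es) (auto simp: is_walk_def)
  then show ?thesis unfolding hyperforest_def is_cycle_def by fastforce
qed

lemma last_notin_butlast: "distinct xs \<Longrightarrow> xs \<noteq> [] \<Longrightarrow> last xs \<notin> set (butlast xs)"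
proof -
  assume "distinct xs" "xs \<noteq> []"
  then have "distinct (butlast xs @ [last xs])" by simp
  then show ?thesis by simp
qed

lemma not_hyperforest_insert:
  assumes "A \<notin> F" "u \<in> A" "v \<in> A" "u \<noteq> v" "(hyper_adj F)\<^sup>*\<^sup>* u v"
  shows "\<not> hyperforest (insert A F)"
proof -
  obtain vs es where p: "simple_walk F vs es" "hd vs = u" "last vs = v"
    using rtranclp_imp_simple_walk[OF assms(5)] by blast
  have pr: "is_walk F vs es" "distinct vs" "distinct es" "vs \<noteq> []"
    using simple_walk_is_walk[OF p(1)] by auto
  have esne: "es \<noteq> []" using pr(1) p assms(4) by (auto simp: is_walk_Nil)
  have "A \<notin> set es" using pr(1) assms(1) by (auto simp: is_walk_def in_set_conv_nth)
  moreover have "is_walk (insert A F) (v # vs) (A # es)"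
  proof -
    have "is_walk (insert A F) vs es" using pr(1) by (rule is_walk_mono) auto
    then show ?thesis using pr p assms(2,3) by (simp add: is_walk_Cons)
  qed
  moreover have "distinct (butlast (v # vs))"
    using pr p last_notin_butlast[of vs] by (simp add: distinct_butlast)
  moreover have "last (v # vs) = hd (v # vs)" using pr p by simp
  moreover have "length (A # es) \<ge> 2" using esne by (cases es) auto
  ultimately have "is_cycle (insert A F) (v # vs) (A # es)" using pr by (simp add: is_cycle_def)
  then show ?thesis unfolding hyperforest_def by blast
qed

lemma is_walk_segment_rtranclp:
  assumes w: "is_walk G vs es" and "i \<le> j" "j \<le> length es"
    and F: "\<And>l. i \<le> l \<Longrightarrow> l < j \<Longrightarrow> es ! l \<in> F"
  shows "(hyper_adj F)\<^sup>*\<^sup>* (vs ! i) (vs ! j)"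
  using assms(2-)
proof (induction j)
  case (Suc j)
  show ?case
  proof (cases "i = Suc j")
    case False
    then have j: "i \<le> j" "j < length es" using Suc by auto
    then have "(hyper_adj F)\<^sup>*\<^sup>* (vs ! i) (vs ! j)" using Suc by auto
    moreover have "hyper_adj F (vs ! j) (vs ! Suc j)"
      using w j Suc.prems(3)[of j] unfolding hyper_adj_def is_walk_def by auto
    ultimately show ?thesis by (rule rtranclp.rtrancl_into_rtrancl)
  qed simp
qed simp

lemma is_cycle_consecutive_distinct:
  assumes c: "is_cycle G vs es" and m: "m < length es"
  shows "vs ! m \<noteq> vs ! Suc m"
proof -
  have w: "is_walk G vs es" and n2: "length es \<ge> 2" and db: "distinct (butlast vs)"
    and lh: "last vs = hd vs" using c by (auto simp: is_cycle_def)
  have len: "length vs = Suc (length es)" using w by (simp add: is_walk_def)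
  have bl: "butlast vs ! i = vs ! i" if "i < length es" for i
    using that len by (simp add: nth_butlast)
  show ?thesis
  proof (cases "Suc m < length es")
    case True
    then have "butlast vs ! m \<noteq> butlast vs ! Suc m"
      using nth_eq_iff_index_eq[OF db, of m "Suc m"] len by simp
    then show ?thesis using bl[of m] bl[of "Suc m"] True by simp
  next
    case False
    then have last: "Suc m = length es" and "0 < m" and ne: "es \<noteq> []" using m n2 by auto
    then have "butlast vs ! m \<noteq> butlast vs ! 0"
      using nth_eq_iff_index_eq[OF db, of m 0] len by simp
    moreover have "vs ! length es = vs ! 0"
      using lh len is_walk_nonempty[OF w] by (simp add: hd_conv_nth last_conv_nth)
    ultimately show ?thesis using bl[of m] bl[of 0] m last ne by simp
  qed
qed

lemma hyperforest_insert:
  assumes hf: "hyperforest F"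
    and sep: "\<And>u v. u \<in> A \<Longrightarrow> v \<in> A \<Longrightarrow> (hyper_adj F)\<^sup>*\<^sup>* u v \<Longrightarrow> u = v"
  shows "hyperforest (insert A F)"
  unfolding hyperforest_def
proof
  assume "\<exists>vs es. is_cycle (insert A F) vs es"
  then obtain vs es where c: "is_cycle (insert A F) vs es" by blast
  then have w: "is_walk (insert A F) vs es" and de: "distinct es" and lh: "last vs = hd vs"
    by (auto simp: is_cycle_def)
  have len: "length vs = Suc (length es)" using w by (simp add: is_walk_def)
  show False
  proof (cases "A \<in> set es")
    case False
    then have "is_walk F vs es" using w by (auto simp: is_walk_def in_set_conv_nth)
    then have "is_cycle F vs es" using c by (simp add: is_cycle_def)
    then show False using hf by (auto simp: hyperforest_def)
  next
    case True
    then obtain m where m: "m < length es" "es ! m = A" by (auto simp: in_set_conv_nth)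
    have other_edges: "es ! l \<in> F" if "l < length es" "l \<noteq> m" for l
    proof -
      have "es ! l \<noteq> A" using de m that by (metis nth_eq_iff_index_eq)
      then show ?thesis using w that by (auto simp: is_walk_def)
    qed
    have "(hyper_adj F)\<^sup>*\<^sup>* (vs ! Suc m) (vs ! length es)"
      using m by (intro is_walk_segment_rtranclp[OF w]) (auto intro: other_edges)
    moreover have "vs ! length es = vs ! 0"
      using lh len is_walk_nonempty[OF w] by (simp add: hd_conv_nth last_conv_nth)
    moreover have "(hyper_adj F)\<^sup>*\<^sup>* (vs ! 0) (vs ! m)"
      using m by (intro is_walk_segment_rtranclp[OF w]) (auto intro: other_edges)
    ultimately have "(hyper_adj F)\<^sup>*\<^sup>* (vs ! Suc m) (vs ! m)" by simp
    moreover have "vs ! m \<in> A" "vs ! Suc m \<in> A" using w m by (auto simp: is_walk_def)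
    ultimately have "vs ! Suc m = vs ! m" by (intro sep)
    then show False using is_cycle_consecutive_distinct[OF c m(1)] by simp
  qed
qed

lemma hyperforest_insert_iff:
  assumes "hyperforest F" "A \<notin> F"
  shows "hyperforest (insert A F) \<longleftrightarrow> (\<forall>u\<in>A. \<forall>v\<in>A. (hyper_adj F)\<^sup>*\<^sup>* u v \<longrightarrow> u = v)"
proof (intro iffI ballI impI)
  fix u v assume hf: "hyperforest (insert A F)" and uv: "u \<in> A" "v \<in> A" "(hyper_adj F)\<^sup>*\<^sup>* u v"
  show "u = v"
  proof (rule ccontr)
    assume "u \<noteq> v"
    from not_hyperforest_insert[OF assms(2) uv(1,2) this uv(3)] hf show False by simp
  qed
qed (rule hyperforest_insert[OF assms(1)]; simp)

definition component_of :: "'a set \<Rightarrow> 'a set set \<Rightarrow> 'a \<Rightarrow> 'a set" where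
  "component_of V F u = {v \<in> V. (hyper_adj F)\<^sup>*\<^sup>* u v}"

lemma components_eq_image: "components V F = component_of V F ` V"
  unfolding components_def component_of_def walk_connected_iff by auto

lemma component_of_self: "u \<in> V \<Longrightarrow> u \<in> component_of V F u"
  by (simp add: component_of_def)

lemma component_of_in_components: "x \<in> V \<Longrightarrow> component_of V F x \<in> components V F"
  by (simp add: components_eq_image)

lemma components_subset: "C \<in> components V F \<Longrightarrow> C \<subseteq> V"
  by (auto simp: components_eq_image component_of_def)

lemma finite_components: "finite V \<Longrightarrow> finite (components V F)"
  by (simp add: components_eq_image)

lemma component_of_eq: "v \<in> component_of V F u \<Longrightarrow> component_of V F v = component_of V F u"
  unfolding component_of_def by (auto intro: rtranclp_trans rtranclp_hyper_adj_sym)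

lemma components_eq_component_of:
  "C \<in> components V F \<Longrightarrow> x \<in> C \<Longrightarrow> C = component_of V F x"
  unfolding components_eq_image by (metis component_of_eq imageE)

lemma components_disjoint:
  assumes "C \<in> components V F" "C' \<in> components V F" "C \<noteq> C'"
  shows "C \<inter> C' = {}"
proof (rule ccontr)
  assume "C \<inter> C' \<noteq> {}"
  then obtain x where "x \<in> C" "x \<in> C'" by blast
  then have "C = component_of V F x" "C' = component_of V F x"
    using assms(1,2) by (simp_all add: components_eq_component_of)
  with assms(3) show False by simp
qed

lemma edge_subset_component_of:
  assumes "B \<in> F" "B \<subseteq> V" "b \<in> B"
  shows "B \<subseteq> component_of V F b"
proof
  fix x assume "x \<in> B"
  then have "hyper_adj F b x" using assms by (auto simp: hyper_adj_def)
  then show "x \<in> component_of V F b" using assms \<open>x \<in> B\<close> by (auto simp: component_of_def)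
qed

lemma components_empty: "components V {} = (\<lambda>u. {u}) ` V"
proof -
  have "(hyper_adj {})\<^sup>*\<^sup>* u v \<longleftrightarrow> u = v" for u v :: 'a
  proof
    assume "(hyper_adj {})\<^sup>*\<^sup>* u v"
    then show "u = v" by (induction rule: rtranclp_induct) (auto simp: hyper_adj_def)
  qed simp
  then show ?thesis by (auto simp: components_eq_image component_of_def)
qed

lemma rtranclp_hyper_adj_mono:
  "(hyper_adj F)\<^sup>*\<^sup>* x y \<Longrightarrow> F \<subseteq> G \<Longrightarrow> (hyper_adj G)\<^sup>*\<^sup>* x y"
proof (induction rule: rtranclp_induct)
  case (step y z)
  then have "hyper_adj G y z" by (auto simp: hyper_adj_def)
  with step show ?case by (meson rtranclp.rtrancl_into_rtrancl)
qed simp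

lemma rtranclp_hyper_adj_insert_iff:
  "(hyper_adj (insert A F))\<^sup>*\<^sup>* x y \<longleftrightarrow>
     (hyper_adj F)\<^sup>*\<^sup>* x y \<or> ((\<exists>a\<in>A. (hyper_adj F)\<^sup>*\<^sup>* x a) \<and> (\<exists>b\<in>A. (hyper_adj F)\<^sup>*\<^sup>* b y))"
    (is "?lhs \<longleftrightarrow> ?rhs")
proof
  assume ?lhs
  then show ?rhs
  proof (induction rule: rtranclp_induct)
    case (step y z)
    from step(2) consider "hyper_adj F y z" | "y \<in> A" "z \<in> A" by (auto simp: hyper_adj_def)
    then show ?case
    proof cases
      case 1
      then show ?thesis using step(3) by (meson rtranclp.rtrancl_into_rtrancl)
    next
      case 2
      then show ?thesis using step(3) by blast
    qed
  qed simp
next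
  assume ?rhs
  then show ?lhs
  proof
    assume "(hyper_adj F)\<^sup>*\<^sup>* x y"
    then show ?lhs by (rule rtranclp_hyper_adj_mono) auto
  next
    assume "(\<exists>a\<in>A. (hyper_adj F)\<^sup>*\<^sup>* x a) \<and> (\<exists>b\<in>A. (hyper_adj F)\<^sup>*\<^sup>* b y)"
    then obtain a b where ab: "a \<in> A" "b \<in> A" "(hyper_adj F)\<^sup>*\<^sup>* x a" "(hyper_adj F)\<^sup>*\<^sup>* b y"
      by blast
    have "(hyper_adj (insert A F))\<^sup>*\<^sup>* x a" using ab(3) by (rule rtranclp_hyper_adj_mono) auto
    moreover have "hyper_adj (insert A F) a b" using ab by (auto simp: hyper_adj_def)
    moreover have "(hyper_adj (insert A F))\<^sup>*\<^sup>* b y"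
      using ab(4) by (rule rtranclp_hyper_adj_mono) auto
    ultimately show ?lhs by (meson rtranclp.rtrancl_into_rtrancl rtranclp_trans)
  qed
qed

definition components_meeting :: "'a set \<Rightarrow> 'a set set \<Rightarrow> 'a set \<Rightarrow> 'a set set" where
  "components_meeting V F A = {C \<in> components V F. C \<inter> A \<noteq> {}}"

lemma Union_components_meeting:
  assumes "A \<subseteq> V"
  shows "\<Union>(components_meeting V F A) = {y \<in> V. \<exists>b\<in>A. (hyper_adj F)\<^sup>*\<^sup>* b y}"
proof (intro equalityI subsetI)
  fix y assume "y \<in> \<Union>(components_meeting V F A)"
  then obtain C a where C: "C \<in> components V F" "y \<in> C" "a \<in> C" "a \<in> A"
    by (auto simp: components_meeting_def)
  have "C = component_of V F a" using C(1,3) by (rule components_eq_component_of)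
  then show "y \<in> {y \<in> V. \<exists>b\<in>A. (hyper_adj F)\<^sup>*\<^sup>* b y}" using C by (auto simp: component_of_def)
next
  fix y assume "y \<in> {y \<in> V. \<exists>b\<in>A. (hyper_adj F)\<^sup>*\<^sup>* b y}"
  then obtain b where b: "y \<in> V" "b \<in> A" "(hyper_adj F)\<^sup>*\<^sup>* b y" by blast
  then have "component_of V F b \<in> components_meeting V F A"
    using assms component_of_self[of b V F] component_of_in_components[of b V F]
    by (auto simp: components_meeting_def)
  moreover have "y \<in> component_of V F b" using b by (simp add: component_of_def)
  ultimately show "y \<in> \<Union>(components_meeting V F A)" by blast
qed

lemma component_of_insert:
  assumes "A \<subseteq> V"
  shows "component_of V (insert A F) x =
    (if component_of V F x \<inter> A \<noteq> {} then \<Union>(components_meeting V F A) else component_of V F x)"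
proof (cases "component_of V F x \<inter> A \<noteq> {}")
  case True
  then obtain a where "a \<in> A" "(hyper_adj F)\<^sup>*\<^sup>* x a" by (auto simp: component_of_def)
  then have "component_of V (insert A F) x = {y \<in> V. \<exists>b\<in>A. (hyper_adj F)\<^sup>*\<^sup>* b y}"
    unfolding component_of_def rtranclp_hyper_adj_insert_iff
    by (auto intro: rtranclp_trans rtranclp_hyper_adj_sym)
  then show ?thesis using True Union_components_meeting[OF assms] by simp
next
  case False
  then have "\<not> (\<exists>a\<in>A. (hyper_adj F)\<^sup>*\<^sup>* x a)" using assms by (auto simp: component_of_def)
  then show ?thesis using False
    unfolding component_of_def rtranclp_hyper_adj_insert_iff by auto
qed

lemma components_insert:
  assumes AV: "A \<subseteq> V" and "A \<noteq> {}"
  shows "components V (insert A F) =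
    insert (\<Union>(components_meeting V F A)) (components V F - components_meeting V F A)"
    (is "_ = insert ?M (_ - ?K)")
proof (intro equalityI subsetI)
  fix C assume "C \<in> components V (insert A F)"
  then obtain x where x: "x \<in> V" "C = component_of V (insert A F) x"
    by (auto simp: components_eq_image)
  show "C \<in> insert ?M (components V F - ?K)"
  proof (cases "component_of V F x \<inter> A \<noteq> {}")
    case True
    then show ?thesis using x component_of_insert[OF AV] by simp
  next
    case False
    then show ?thesis using x component_of_insert[OF AV] component_of_in_components[OF x(1)]
      by (simp add: components_meeting_def)
  qed
next
  fix C assume C: "C \<in> insert ?M (components V F - ?K)"
  show "C \<in> components V (insert A F)"
  proof (cases "C = ?M")
    case True
    obtain a where a: "a \<in> A" using assms(2) by auto
    then have "a \<in> V" using AV by auto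
    then have "component_of V F a \<inter> A \<noteq> {}" using a component_of_self by fastforce
    then have "component_of V (insert A F) a = ?M" using component_of_insert[OF AV] by simp
    then show ?thesis using True \<open>a \<in> V\<close> by (auto simp: components_eq_image)
  next
    case False
    then have "C \<in> components V F" "C \<inter> A = {}" using C by (auto simp: components_meeting_def)
    then obtain x where x: "x \<in> V" "C = component_of V F x" by (auto simp: components_eq_image)
    then have "component_of V (insert A F) x = C"
      using component_of_insert[OF AV] \<open>C \<inter> A = {}\<close> by simp
    then show ?thesis using x by (auto simp: components_eq_image)
  qed
qed

lemma pairwise_disjnt_components: "pairwise disjnt (components V F)"
  unfolding pairwise_def disjnt_def using components_disjoint by blast

lemma finite_component: "finite V \<Longrightarrow> C \<in> components V F \<Longrightarrow> finite C"
  by (meson components_subset finite_subset)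

lemma components_meeting_subset: "components_meeting V F A \<subseteq> components V F"
  by (auto simp: components_meeting_def)

section \<open>Products over hyperforests\<close>

abbreviation edges_in :: "'a set set \<Rightarrow> 'a set \<Rightarrow> 'a set set" where
  "edges_in F C \<equiv> {B \<in> F. B \<subseteq> C}"

lemma hypergraph_insert: "hypergraph V (insert A F) \<longleftrightarrow> hypergraph V F \<and> A \<subseteq> V \<and> card A \<ge> 2"
  by (auto simp: hypergraph_def)

lemma finite_edges: "hypergraph V E \<Longrightarrow> finite E"
  unfolding hypergraph_def by (meson Pow_iff finite_Pow_iff finite_subset subsetI)

lemma f_ev_glue_family:
  assumes "finite K" "finite A"
    and meet: "\<And>C. C \<in> K \<Longrightarrow> finite C \<and> (\<exists>v. C \<inter> A = {v})"
    and disj: "pairwise disjnt K"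
  shows "f_ev N A * (\<Prod>C\<in>K. f_ev (n C) C) = f_ev (N + (\<Sum>C\<in>K. n C)) (A \<union> \<Union>K)"
  using assms(1) meet disj
proof (induction K rule: finite_induct)
  case (insert C K)
  obtain v where v: "C \<inter> A = {v}" and "finite C" using insert.prems(1) by blast
  have fin: "finite (A \<union> \<Union>K)" using assms(2) insert.hyps(1) insert.prems(1) by blast
  have "disjnt C' C" if "C' \<in> K" for C'
    using insert.prems(2) by (rule pairwiseD) (use that insert.hyps(2) in auto)
  then have "C' \<inter> C = {}" if "C' \<in> K" for C' using that by (simp add: disjnt_def)
  with v have "(A \<union> \<Union>K) \<inter> C = {v}" by blast
  then have glue: "f_ev (N + (\<Sum>C\<in>K. n C)) (A \<union> \<Union>K) * f_ev (n C) C
      = f_ev (N + (\<Sum>C\<in>K. n C) + n C) (A \<union> \<Union>K \<union> C)"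
    using f_ev_glue[OF fin \<open>finite C\<close>] by blast
  have IH: "f_ev N A * (\<Prod>C\<in>K. f_ev (n C) C) = f_ev (N + (\<Sum>C\<in>K. n C)) (A \<union> \<Union>K)"
    using insert.IH insert.prems pairwise_subset[OF insert.prems(2)] by blast
  have "f_ev N A * (\<Prod>C\<in>insert C K. f_ev (n C) C) = f_ev N A * (\<Prod>C\<in>K. f_ev (n C) C) * f_ev (n C) C"
    using insert.hyps by (simp add: mult_ac)
  also have "\<dots> = f_ev (N + (\<Sum>C\<in>K. n C) + n C) (A \<union> \<Union>K \<union> C)" unfolding IH glue ..
  also have "\<dots> = f_ev (N + (\<Sum>C\<in>insert C K. n C)) (A \<union> \<Union>(insert C K))"
    using insert.hyps by (simp add: ac_simps)
  finally show ?case .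
qed simp

context
  fixes V :: "'a::linorder set" and F :: "'a set set" and A :: "'a set"
  assumes hyp: "hypergraph V (insert A F)" and new: "A \<notin> F"
    and sep: "\<And>u v. u \<in> A \<Longrightarrow> v \<in> A \<Longrightarrow> (hyper_adj F)\<^sup>*\<^sup>* u v \<Longrightarrow> u = v"
begin

private lemma AV: "A \<subseteq> V" and A_nonempty: "A \<noteq> {}" and finite_V: "finite V"
  using hyp by (auto simp: hypergraph_def)

lemma components_meeting_once:
  assumes "C \<in> components_meeting V F A"
  shows "\<exists>v. C \<inter> A = {v}"
proof -
  have C: "C \<in> components V F" "C \<inter> A \<noteq> {}" using assms by (auto simp: components_meeting_def)
  then obtain v where v: "v \<in> C" "v \<in> A" by blast
  have "u = v" if "u \<in> C" "u \<in> A" for u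
  proof (rule sep[OF that(2) v(2)])
    have "C = component_of V F u" using C(1) that(1) by (rule components_eq_component_of)
    then show "(hyper_adj F)\<^sup>*\<^sup>* u v" using v(1) by (simp add: component_of_def)
  qed
  then have "C \<inter> A = {v}" using v by blast
  then show ?thesis ..
qed

lemma component_of_in_components_meeting:
  "x \<in> A \<Longrightarrow> component_of V F x \<in> components_meeting V F A"
  using AV component_of_self[of x V F] component_of_in_components[of x V F]
  by (auto simp: components_meeting_def)

lemma bij_betw_component_of_meeting: "bij_betw (component_of V F) A (components_meeting V F A)"
proof (rule bij_betwI')
  fix x y assume xy: "x \<in> A" "y \<in> A"
  show "component_of V F x = component_of V F y \<longleftrightarrow> x = y"
  proof
    assume "component_of V F x = component_of V F y"
    moreover have "y \<in> component_of V F y" using xy AV by (intro component_of_self) auto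
    ultimately have "y \<in> component_of V F x" by simp
    then have "(hyper_adj F)\<^sup>*\<^sup>* x y" by (simp add: component_of_def)
    then show "x = y" by (rule sep[OF xy])
  qed simp
next
  fix C assume C: "C \<in> components_meeting V F A"
  then obtain v where "C \<inter> A = {v}" using components_meeting_once by blast
  then have "v \<in> A" "v \<in> C" by auto
  have "C \<in> components V F" using C by (simp add: components_meeting_def)
  then have "C = component_of V F v" using \<open>v \<in> C\<close> by (rule components_eq_component_of)
  with \<open>v \<in> A\<close> show "\<exists>x\<in>A. C = component_of V F x" ..
qed (rule component_of_in_components_meeting)

lemma subset_Union_components_meeting: "A \<subseteq> \<Union>(components_meeting V F A)"
proof
  fix x assume "x \<in> A"
  then have "x \<in> component_of V F x" using AV by (intro component_of_self) auto
  with component_of_in_components_meeting[OF \<open>x \<in> A\<close>] show "x \<in> \<Union>(components_meeting V F A)"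
    by blast
qed

lemma Union_components_meeting_notin:
  "\<Union>(components_meeting V F A) \<notin> components V F - components_meeting V F A"
proof
  assume "\<Union>(components_meeting V F A) \<in> components V F - components_meeting V F A"
  moreover have "\<Union>(components_meeting V F A) \<inter> A \<noteq> {}"
    using subset_Union_components_meeting A_nonempty by blast
  ultimately show False by (simp add: components_meeting_def)
qed

lemma edges_in_insert_untouched:
  assumes "C \<in> components V F - components_meeting V F A"
  shows "edges_in (insert A F) C = edges_in F C"
proof -
  have "C \<inter> A = {}" using assms by (simp add: components_meeting_def)
  then have "\<not> A \<subseteq> C" using A_nonempty by blast
  then show ?thesis by auto
qed

lemma sum_edges_in_insert_merged:
  "(\<Sum>B\<in>edges_in (insert A F) (\<Union>(components_meeting V F A)). g B)
    = g A + (\<Sum>C\<in>components_meeting V F A. \<Sum>B\<in>edges_in F C. g B)"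
proof -
  let ?K = "components_meeting V F A"
  have K: "?K \<subseteq> components V F" by (rule components_meeting_subset)
  then have "finite ?K" using finite_components[OF finite_V] by (rule finite_subset)
  have FV: "B \<subseteq> V" "B \<noteq> {}" if "B \<in> F" for B
    using hyp that by (auto simp: hypergraph_def)
  have "edges_in (insert A F) (\<Union>?K) = insert A (\<Union>C\<in>?K. edges_in F C)"
  proof (intro equalityI subsetI)
    fix B assume B: "B \<in> edges_in (insert A F) (\<Union>?K)"
    show "B \<in> insert A (\<Union>C\<in>?K. edges_in F C)"
    proof (cases "B = A")
      case False
      with B have "B \<in> F" by simp
      then obtain b where "b \<in> B" using FV by blast
      with B obtain C where C: "C \<in> ?K" "b \<in> C" by blast
      then have "C = component_of V F b" using K by (intro components_eq_component_of) auto
      then have "B \<subseteq> C" using edge_subset_component_of[OF \<open>B \<in> F\<close> FV(1)[OF \<open>B \<in> F\<close>] \<open>b \<in> B\<close>] by simp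
      with C(1) \<open>B \<in> F\<close> show ?thesis by blast
    qed simp
  next
    fix B assume "B \<in> insert A (\<Union>C\<in>?K. edges_in F C)"
    then show "B \<in> edges_in (insert A F) (\<Union>?K)"
      using subset_Union_components_meeting by blast
  qed
  moreover have "A \<notin> (\<Union>C\<in>?K. edges_in F C)" using new by blast
  moreover have "edges_in F C \<inter> edges_in F C' = {}" if "C \<in> ?K" "C' \<in> ?K" "C \<noteq> C'" for C C'
  proof -
    have "C \<inter> C' = {}" using K that by (intro components_disjoint) auto
    then show ?thesis using FV by blast
  qed
  moreover have "finite (edges_in F C)" for C using finite_edges[OF hyp] by simp
  ultimately show ?thesis
    using \<open>finite ?K\<close> by (simp add: sum.UNION_disjoint)
qed

lemma prod_components_insert:
  "(\<Prod>C\<in>components V (insert A F). h C)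
    = h (\<Union>(components_meeting V F A)) * (\<Prod>C\<in>components V F - components_meeting V F A. h C)"
  using components_insert[OF AV A_nonempty] Union_components_meeting_notin finite_components[OF finite_V]
  by simp

lemma prod_f_ev_insert_separated:
  "f_ev (w A) A * (\<Prod>C\<in>components V F. f_ev (\<Sum>B\<in>edges_in F C. w B) C)
    = (\<Prod>C\<in>components V (insert A F). f_ev (\<Sum>B\<in>edges_in (insert A F) C. w B) C)"
proof -
  let ?K = "components_meeting V F A"
  have K: "?K \<subseteq> components V F" by (rule components_meeting_subset)
  have fin: "finite (components V F)" "finite A"
    using finite_components[OF finite_V] finite_subset[OF AV finite_V] .
  have meet: "finite C \<and> (\<exists>v. C \<inter> A = {v})" if "C \<in> ?K" for C
  proof
    show "finite C" using that K by (intro finite_component[OF finite_V]) auto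
  qed (rule components_meeting_once[OF that])
  have disj: "pairwise disjnt ?K"
    using pairwise_disjnt_components K by (rule pairwise_subset)
  have "A \<union> \<Union>?K = \<Union>?K" using subset_Union_components_meeting by blast
  then have merged: "f_ev (w A) A * (\<Prod>C\<in>?K. f_ev (\<Sum>B\<in>edges_in F C. w B) C)
      = f_ev (\<Sum>B\<in>edges_in (insert A F) (\<Union>?K). w B) (\<Union>?K)"
    using f_ev_glue_family[OF finite_subset[OF K fin(1)] fin(2) meet disj]
    unfolding sum_edges_in_insert_merged by simp
  have "f_ev (w A) A * (\<Prod>C\<in>components V F. f_ev (\<Sum>B\<in>edges_in F C. w B) C)
      = f_ev (w A) A * (\<Prod>C\<in>?K. f_ev (\<Sum>B\<in>edges_in F C. w B) C)
        * (\<Prod>C\<in>components V F - ?K. f_ev (\<Sum>B\<in>edges_in F C. w B) C)"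
    unfolding prod.subset_diff[OF K fin(1)] by (simp only: mult_ac)
  also have "\<dots> = f_ev (\<Sum>B\<in>edges_in (insert A F) (\<Union>?K). w B) (\<Union>?K)
        * (\<Prod>C\<in>components V F - ?K. f_ev (\<Sum>B\<in>edges_in (insert A F) C. w B) C)"
    unfolding merged using edges_in_insert_untouched by simp
  also have "\<dots> = (\<Prod>C\<in>components V (insert A F). f_ev (\<Sum>B\<in>edges_in (insert A F) C. w B) C)"
    by (rule prod_components_insert[symmetric])
  finally show ?thesis .
qed

lemma card_components_insert_separated:
  assumes IH: "\<And>C. C \<in> components V F \<Longrightarrow> (\<Sum>B\<in>edges_in F C. card B - 1) + 1 = card C"
    and C: "C \<in> components V (insert A F)"
  shows "(\<Sum>B\<in>edges_in (insert A F) C. card B - 1) + 1 = card C"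
proof (cases "C \<in> components V F - components_meeting V F A")
  case True
  then show ?thesis using IH edges_in_insert_untouched by simp
next
  case False
  let ?K = "components_meeting V F A"
  have M: "C = \<Union>?K" using False C components_insert[OF AV A_nonempty, of F] by blast
  have K: "?K \<subseteq> components V F" by (rule components_meeting_subset)
  then have "finite ?K" using finite_components[OF finite_V] by (rule finite_subset)
  have finC: "finite C'" "C' \<noteq> {}" if "C' \<in> ?K" for C'
    using that K by (auto simp: components_meeting_def intro: finite_component[OF finite_V])
  have "card (\<Union>?K) = (\<Sum>C'\<in>?K. card C')"
    using pairwise_subset[OF pairwise_disjnt_components K] finC(1) by (rule card_Union_disjoint)
  also have "\<dots> = (\<Sum>C'\<in>?K. (card C' - 1) + 1)"
    using finC by (intro sum.cong) (auto simp: Suc_le_eq card_gt_0_iff)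
  also have "\<dots> = (\<Sum>C'\<in>?K. card C' - 1) + card ?K" unfolding sum.distrib by simp
  also have "(\<Sum>C'\<in>?K. card C' - 1) = (\<Sum>C'\<in>?K. \<Sum>B\<in>edges_in F C'. card B - 1)"
  proof (rule sum.cong[OF refl])
    fix C' assume "C' \<in> ?K"
    then have "(\<Sum>B\<in>edges_in F C'. card B - 1) + 1 = card C'" using K by (intro IH) auto
    then show "card C' - 1 = (\<Sum>B\<in>edges_in F C'. card B - 1)" by simp
  qed
  also have "card ?K = card A"
    using bij_betw_same_card[OF bij_betw_component_of_meeting] by simp
  finally have "card C = (\<Sum>C'\<in>?K. \<Sum>B\<in>edges_in F C'. card B - 1) + card A" using M by simp
  moreover have "(\<Sum>B\<in>edges_in (insert A F) C. card B - 1)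
      = (card A - 1) + (\<Sum>C'\<in>?K. \<Sum>B\<in>edges_in F C'. card B - 1)"
    using M sum_edges_in_insert_merged[of "\<lambda>B. card B - 1"] by simp
  moreover have "card A > 0" using A_nonempty finite_subset[OF AV finite_V] by (simp add: card_gt_0_iff)
  ultimately show ?thesis by linarith
qed

end

lemma hyperforest_insert_separated:
  assumes "hyperforest (insert A F)" "A \<notin> F"
  shows "\<forall>u\<in>A. \<forall>v\<in>A. (hyper_adj F)\<^sup>*\<^sup>* u v \<longrightarrow> u = v"
proof -
  have "hyperforest F" using assms(1) by (rule hyperforest_mono) auto
  with assms show ?thesis using hyperforest_insert_iff by blast
qed

lemma prod_f_ev_hyperforest:
  fixes w :: "'a::linorder set \<Rightarrow> complex"
  assumes "hypergraph V F" "hyperforest F"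
  shows "(\<Prod>A\<in>F. f_ev (w A) A) = (\<Prod>C\<in>components V F. f_ev (\<Sum>B\<in>edges_in F C. w B) C)"
  using finite_edges[OF assms(1)] assms
proof (induction F rule: finite_induct)
  case empty
  then show ?case by (simp add: components_empty prod.reindex inj_on_def f_ev_singleton)
next
  case (insert A F)
  then have "hypergraph V F" "hyperforest F"
    using hypergraph_insert hyperforest_mono[of "insert A F" F] by auto
  with insert have "(\<Prod>B\<in>insert A F. f_ev (w B) B)
      = f_ev (w A) A * (\<Prod>C\<in>components V F. f_ev (\<Sum>B\<in>edges_in F C. w B) C)" by simp
  also have "\<dots> = (\<Prod>C\<in>components V (insert A F). f_ev (\<Sum>B\<in>edges_in (insert A F) C. w B) C)"
    using hyperforest_insert_separated[OF insert.prems(2) insert.hyps(2)]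
    by (intro prod_f_ev_insert_separated[OF insert.prems(1) insert.hyps(2)]) blast
  finally show ?case .
qed

lemma card_components_hyperforest:
  fixes V :: "'a::linorder set"
  assumes "hypergraph V F" "hyperforest F" "C \<in> components V F"
  shows "(\<Sum>B\<in>edges_in F C. card B - 1) + 1 = card C"
  using finite_edges[OF assms(1)] assms
proof (induction F arbitrary: C rule: finite_induct)
  case empty
  then show ?case by (auto simp: components_empty)
next
  case (insert A F)
  then have "hypergraph V F" "hyperforest F"
    using hypergraph_insert hyperforest_mono[of "insert A F" F] by auto
  with insert show ?case
    using hyperforest_insert_separated[OF insert.prems(2) insert.hyps(2)]
    by (intro card_components_insert_separated[OF insert.prems(1) insert.hyps(2)]) blast+
qed

lemma prod_f_ev_not_hyperforest:
  fixes w :: "'a::linorder set \<Rightarrow> complex"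
  assumes "hypergraph V F" "\<not> hyperforest F"
  shows "(\<Prod>A\<in>F. f_ev (w A) A) = 0"
  using finite_edges[OF assms(1)] assms
proof (induction F rule: finite_induct)
  case empty
  then show ?case by (simp add: hyperforest_empty)
next
  case (insert A F)
  have hyp: "hypergraph V F" and AV: "A \<subseteq> V" using insert.prems by (auto simp: hypergraph_insert)
  show ?case
  proof (cases "hyperforest F")
    case False
    then show ?thesis using insert hyp by simp
  next
    case True
    with insert obtain u v where uv: "u \<in> A" "v \<in> A" "u \<noteq> v" "(hyper_adj F)\<^sup>*\<^sup>* u v"
      using hyperforest_insert_iff[OF True insert.hyps(2)] by blast
    let ?C = "component_of V F u"
    have C: "?C \<in> components V F" "u \<in> ?C" "v \<in> ?C"
      using uv AV component_of_in_components[of u V F] by (auto simp: component_of_def)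
    have fin: "finite V" "finite (components V F)" "finite A"
      using hyp AV by (auto simp: hypergraph_def finite_components intro: finite_subset)
    have "(\<Prod>B\<in>insert A F. f_ev (w B) B)
        = f_ev (w A) A * (\<Prod>C\<in>components V F. f_ev (\<Sum>B\<in>edges_in F C. w B) C)"
      using insert.hyps prod_f_ev_hyperforest[OF hyp True] by simp
    also have "\<dots> = f_ev (w A) A * f_ev (\<Sum>B\<in>edges_in F ?C. w B) ?C
        * (\<Prod>C\<in>components V F - {?C}. f_ev (\<Sum>B\<in>edges_in F C. w B) C)"
      unfolding prod.remove[OF fin(2) C(1)] by (simp only: mult.assoc)
    also have "f_ev (w A) A * f_ev (\<Sum>B\<in>edges_in F ?C. w B) ?C = 0"
      using fin finite_component C uv by (intro f_ev_overlap) auto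
    finally show ?thesis by simp
  qed
qed

lemma Rep_grassmann_even_zero_on_infinite: "zero_on_infinite (Rep_grassmann_even x)"
  using Rep_grassmann_even[of x] by (simp add: even_grass_def)

lemma Rep_scalar_mult: "Rep_grassmann_even (scalar c * x) = gscale c (Rep_grassmann_even x)"
  by (simp add: times_grassmann_even.rep_eq scalar.rep_eq gmult_gconst_left
      Rep_grassmann_even_zero_on_infinite)

lemma Rep_sum: "Rep_grassmann_even (sum f I) = gsum (\<lambda>i. Rep_grassmann_even (f i)) I"
proof (cases "finite I")
  case True
  then show ?thesis
    by (induction I rule: finite_induct)
      (auto simp: gsum_def zero_grassmann_even.rep_eq plus_grassmann_even.rep_eq gadd_def)
qed (simp add: gsum_def zero_grassmann_even.rep_eq)

lemma gprod_map_Rep: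
  assumes "\<And>x. x \<in> set xs \<Longrightarrow> f x = Rep_grassmann_even (h x)"
  shows "gprod (map f xs) = Rep_grassmann_even (prod_list (map h xs))"
  using assms unfolding gprod_def
  by (induction xs) (auto simp: one_grassmann_even.rep_eq times_grassmann_even.rep_eq)

lemma Rep_tau_ev: "Rep_grassmann_even (tau_ev A) = tau A"
proof (cases "finite A")
  case True
  then have "tau_ev A = prod_list (map (\<lambda>k. psibar_psi k k) (sorted_list_of_set A))"
    unfolding tau_ev_def by (metis prod.distinct_set_conv_list sorted_list_of_set(1,3))
  then show ?thesis
    unfolding tau_def by (subst gprod_map_Rep[where h = "\<lambda>k. psibar_psi k k"]) (simp_all add: psibar_psi.rep_eq)
qed (simp add: tau_ev_def tau_def gprod_def one_grassmann_even.rep_eq)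

lemma fA_eq_Rep_f_ev: "fA lam A = Rep_grassmann_even (f_ev (lam * (of_nat (card A) - 1)) A)"
proof -
  have "Rep_grassmann_even (f_ev (lam * (of_nat (card A) - 1)) A) =
     gsub (gsub (gsum (\<lambda>i. tau (A - {i})) A)
               (gsum (\<lambda>x. gmult (gmult (psibar (fst x)) (psi (snd x))) (tau (A - {fst x, snd x})))
                     (off_diagonal A)))
          (gscale (lam * (of_nat (card A) - 1)) (tau A))"
    unfolding f_ev_def f_base_def minus_grassmann_even.rep_eq Rep_scalar_mult
    by (simp add: minus_grassmann_even.rep_eq Rep_sum Rep_tau_ev times_grassmann_even.rep_eq
        psibar_psi.rep_eq case_prod_unfold)
  then show ?thesis unfolding fA_def off_diagonal_def
    by (simp add: fun_eq_iff gsub_def gadd_def gscale_def gsum_def case_prod_unfold algebra_simps)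
qed

lemma gprod_fA_eq_Rep_prod:
  assumes "distinct xs"
  shows "gprod (map (\<lambda>A. fA (l A) A) xs)
    = Rep_grassmann_even (\<Prod>A\<in>set xs. f_ev (l A * (of_nat (card A) - 1)) A)"
proof -
  have "gprod (map (\<lambda>A. fA (l A) A) xs)
      = Rep_grassmann_even (prod_list (map (\<lambda>A. f_ev (l A * (of_nat (card A) - 1)) A) xs))"
    by (rule gprod_map_Rep) (rule fA_eq_Rep_f_ev)
  also have "prod_list (map (\<lambda>A. f_ev (l A * (of_nat (card A) - 1)) A) xs)
      = (\<Prod>A\<in>set xs. f_ev (l A * (of_nat (card A) - 1)) A)"
    by (rule prod.distinct_set_conv_list[OF assms, symmetric])
  finally show ?thesis .
qed

lemma gprod_fA_hyperforest:
  fixes V :: "'a::linorder set" and l L :: "'a set \<Rightarrow> complex"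
  assumes "hypergraph V E" "hyperforest E"
    and "distinct es" "set es = E" "distinct cs" "set cs = components V E"
    and weights: "\<And>C. C \<in> components V E \<Longrightarrow>
      (\<Sum>B\<in>edges_in E C. l B * (of_nat (card B) - 1)) = L C * (of_nat (card C) - 1)"
  shows "gprod (map (\<lambda>A. fA (l A) A) es) = gprod (map (\<lambda>C. fA (L C) C) cs)"
proof -
  have "(\<Prod>A\<in>E. f_ev (l A * (of_nat (card A) - 1)) A)
      = (\<Prod>C\<in>components V E. f_ev (L C * (of_nat (card C) - 1)) C)"
    unfolding prod_f_ev_hyperforest[OF assms(1,2)] using weights by simp
  then show ?thesis
    using gprod_fA_eq_Rep_prod[OF assms(3), of l] gprod_fA_eq_Rep_prod[OF assms(5), of L] assms(4,6)
    by simp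
qed

lemma gprod_fA_not_hyperforest:
  fixes V :: "'a::linorder set"
  assumes "hypergraph V E" "\<not> hyperforest E" "distinct es" "set es = E"
  shows "gprod (map (\<lambda>A. fA (l A) A) es) = gconst 0"
proof -
  have "Rep_grassmann_even 0 = gconst 0" by (simp add: zero_grassmann_even.rep_eq gconst_def fun_eq_iff)
  then show ?thesis
    using gprod_fA_eq_Rep_prod[OF assms(3)] prod_f_ev_not_hyperforest[OF assms(1,2)] assms(4) by simp
qed

lemma of_nat_card_edge:
  "hypergraph V E \<Longrightarrow> B \<in> E \<Longrightarrow> (of_nat (card B) - 1 :: complex) = of_nat (card B - 1)"
  using of_nat_diff[of 1 "card B"] by (auto simp: hypergraph_def)

lemma sum_edges_in_of_nat:
  assumes "hypergraph V E" "(\<Sum>B\<in>edges_in E C. card B - 1) + 1 = card C"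
  shows "(\<Sum>B\<in>edges_in E C. of_nat (card B - 1) :: complex) = of_nat (card C) - 1"
proof -
  have "(\<Sum>B\<in>edges_in E C. of_nat (card B - 1) :: complex) = of_nat (\<Sum>B\<in>edges_in E C. card B - 1)"
    by simp
  also have "(\<Sum>B\<in>edges_in E C. card B - 1) = card C - 1" using assms(2) by linarith
  also have "of_nat (card C - 1) = (of_nat (card C) - 1 :: complex)"
    using assms(2) of_nat_diff[of 1 "card C"] by simp
  finally show ?thesis .
qed

lemma sum_edges_in_const_weight:
  fixes lam :: complex
  assumes "hypergraph V E" "(\<Sum>B\<in>edges_in E C. card B - 1) + 1 = card C"
  shows "(\<Sum>B\<in>edges_in E C. lam * (of_nat (card B) - 1)) = lam * (of_nat (card C) - 1)"
proof -
  have "(\<Sum>B\<in>edges_in E C. lam * (of_nat (card B) - 1)) = (\<Sum>B\<in>edges_in E C. lam * of_nat (card B - 1))"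
    by (intro sum.cong refl) (simp add: of_nat_card_edge[OF assms(1)])
  also have "\<dots> = lam * (of_nat (card C) - 1)"
    using sum_edges_in_of_nat[OF assms] by (simp add: sum_distrib_left[symmetric])
  finally show ?thesis .
qed

lemma sum_edges_in_comp_lambda:
  assumes "hypergraph V E" "(\<Sum>B\<in>edges_in E C. card B - 1) + 1 = card C"
  shows "(\<Sum>B\<in>edges_in E C. l B * (of_nat (card B) - 1)) = comp_lambda E l C * (of_nat (card C) - 1)"
proof -
  have num: "(\<Sum>B\<in>edges_in E C. l B * (of_nat (card B) - 1)) = (\<Sum>B\<in>edges_in E C. of_nat (card B - 1) * l B)"
    by (intro sum.cong refl) (simp add: of_nat_card_edge[OF assms(1)] mult.commute)
  show ?thesis
  proof (cases "edges_in E C = {}")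
    case True
    then show ?thesis using sum_edges_in_of_nat[OF assms] unfolding True by simp
  next
    case False
    then obtain B where B: "B \<in> E" "B \<subseteq> C" by blast
    then have "card B - 1 > 0" using assms(1) by (auto simp: hypergraph_def)
    also have "card B - 1 \<le> (\<Sum>B\<in>edges_in E C. card B - 1)"
      using B finite_edges[OF assms(1)] by (intro member_le_sum) auto
    finally have "(\<Sum>B\<in>edges_in E C. card B - 1) \<noteq> 0" by simp
    then have "(\<Sum>B\<in>edges_in E C. of_nat (card B - 1) :: complex) \<noteq> 0"
      unfolding of_nat_sum[symmetric] of_nat_eq_0_iff .
    then show ?thesis
      unfolding num comp_lambda_def sum_edges_in_of_nat[OF assms, symmetric] by simp
  qed
qed

theorem corollary4p4:
  fixes V :: "'a::linorder set" and E :: "'a set set"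
    and lam :: complex and lamA :: "'a set \<Rightarrow> complex"
  assumes "hypergraph V E"
  shows "(hyperforest E \<longrightarrow>
           (\<forall>es cs. distinct es \<and> set es = E \<and> distinct cs \<and> set cs = components V E \<longrightarrow>
              gprod (map (fA lam) es) = gprod (map (fA lam) cs) \<and>
              gprod (map (\<lambda>A. fA (lamA A) A) es) =
                gprod (map (\<lambda>C. fA (comp_lambda E lamA C) C) cs)))
       \<and> (\<not> hyperforest E \<longrightarrow>
           (\<forall>es. distinct es \<and> set es = E \<longrightarrow>
              gprod (map (fA lam) es) = gconst 0 \<and>
              gprod (map (\<lambda>A. fA (lamA A) A) es) = gconst 0))"
proof (intro conjI impI allI)
  fix es cs
  assume forest: "hyperforest E"
    and lists: "distinct es \<and> set es = E \<and> distinct cs \<and> set cs = components V E"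
  note card = card_components_hyperforest[OF assms forest]
  show "gprod (map (fA lam) es) = gprod (map (fA lam) cs)"
    using lists by (intro gprod_fA_hyperforest[OF assms forest, where l = "\<lambda>_. lam" and L = "\<lambda>_. lam"])
      (simp_all add: sum_edges_in_const_weight[OF assms card])
  show "gprod (map (\<lambda>A. fA (lamA A) A) es) = gprod (map (\<lambda>C. fA (comp_lambda E lamA C) C) cs)"
    using lists by (intro gprod_fA_hyperforest[OF assms forest, where L = "comp_lambda E lamA"])
      (simp_all add: sum_edges_in_comp_lambda[OF assms card])
next
  fix es assume cyclic: "\<not> hyperforest E" and list: "distinct es \<and> set es = E"
  show "gprod (map (fA lam) es) = gconst 0"
    using list gprod_fA_not_hyperforest[OF assms cyclic, where l = "\<lambda>_. lam"] by simp
  show "gprod (map (\<lambda>A. fA (lamA A) A) es) = gconst 0"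
    using list gprod_fA_not_hyperforest[OF assms cyclic, where l = lamA] by simp
qed

end
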